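(* Let $n\ge2$, $0<m\le L$, $\kappa=L/m$, let $\rho\in(0,1)$ satisfy $1/(1-\rho)\ge(\sqrt\kappa+1)/2$, and set $T_s=1/(1-\rho)$ and $c=\dfrac{\kappa-(1+\rho)/(1-\rho)}{\rho\,(\kappa+(1+\rho)/(1-\rho))}\in[-1,1]$. Consider the two-step momentum algorithm with parameters $\alpha=(1+\rho)(1+c\rho)/L$, $\beta=c\rho^2$, $\gamma=0$. Then $$J_{\max}T_s=\sigma_w^2\,p_{1c}(\rho)\,n\kappa(\kappa+1),\qquad J_{\min}T_s=\sigma_w^2\,\kappa\big(2p_{1c}(\rho)(\kappa+1)+(n-2)p_{2c}(\rho)\big).$$ Furthermore, for the gradient noise model ($\sigma_w=\alpha\sigma$), $$J_{\max}T_s=\sigma^2\,p_{3c}(\rho)\,n\kappa(\kappa+1),\qquad J_{\min}T_s=\sigma^2\,\kappa\big(2p_{3c}(\rho)(\kappa+1)+(n-2)p_{4c}(\rho)\big),$$ where $q_c(\rho)=(1-c\rho)/(1-c\rho^2)$, $p_{1c}(\rho)=q_c(\rho)/(2(1+\rho)^2(1+c\rho)^2)$, $p_{2c}(\rho)=q_c(\rho)/((1+\rho)(1+c\rho^2)(1+c\rho))$, $p_{3c}(\rho)=q_c(\rho)/(2L^2)$, $p_{4c}(\rho)=q_c(\rho)q_{-c}(\rho)(1+\rho)/L^2$. In addition, if $c\in[0,1]$ then $p_{1c}(\rho)\in[1/64,1/2]$ and $p_{2c}(\rho)\in[1/16,1]$; and for $c\in[-1,1]$, $p_{3c}(\rho)\in[1/(4L^2),1/L^2]$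 and $p_{4c}(\rho)\in[1/(4L^2),4/L^2]$.
   Context: $\mathcal{Q}_m^L$ is the class of quadratic functions $f(x)=\tfrac12x^TQx-q^Tx$ on $\mathbb{R}^n$ with $q\in\mathbb{R}^n$, $Q=Q^T\succ0$ whose largest eigenvalue is $L$ and smallest is $m$; $x^\star$ is the minimizer. The noisy two-step momentum algorithm with constant parameters $(\alpha,\beta,\gamma)$ is $x^{t+2}=x^{t+1}+\beta(x^{t+1}-x^t)-\alpha\nabla f\big(x^{t+1}+\gamma(x^{t+1}-x^t)\big)+\sigma_w w^t$, where $w^t$ is white noise with $\mathbb{E}[w^t]=0$, $\mathbb{E}[w^t(w^\tau)^T]=I\,\delta(t-\tau)$. In the iterate noise model $\sigma_w=\sigma$, in the gradient noise model $\sigma_w=\alpha\sigma$, with $\sigma>0$. Noise amplification $J=\lim_{t\to\infty}\frac1t\sum_{k=0}^t\mathbb{E}\|x^k-x^\star\|_2^2$ (depends on $f$); $J_{\max}=\max_{f\in\mathcal{Q}_m^L}J$, $J_{\min}=\min_{f\in\mathcal{Q}_m^L}J$. *)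

theory Defs
  imports "HOL-Probability.Probability"
begin

definition mat_eigenvalue :: "real^'n^'n \<Rightarrow> real \<Rightarrow> bool" where
  "mat_eigenvalue Q lam \<longleftrightarrow> (\<exists>v. v \<noteq> 0 \<and> Q *v v = lam *s v)"

definition in_QmL :: "real \<Rightarrow> real \<Rightarrow> real^'n^'n \<Rightarrow> bool" where
  "in_QmL m L Q \<longleftrightarrow> transpose Q = Q \<and> (\<forall>x. x \<noteq> 0 \<longrightarrow> x \<bullet> (Q *v x) > 0)
     \<and> mat_eigenvalue Q L \<and> (\<forall>mu. mat_eigenvalue Q mu \<longrightarrow> mu \<le> L)
     \<and> mat_eigenvalue Q m \<and> (\<forall>mu. mat_eigenvalue Q mu \<longrightarrow> m \<le> mu)"

definition quad_fun :: "real^'n^'n \<Rightarrow> real^'n \<Rightarrow> real^'n \<Rightarrow> real" where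
  "quad_fun Q q x = (1/2) * (x \<bullet> (Q *v x)) - q \<bullet> x"

text \<open>Gradient of quad_fun for symmetric Q.\<close>
definition quad_grad :: "real^'n^'n \<Rightarrow> real^'n \<Rightarrow> real^'n \<Rightarrow> real^'n" where
  "quad_grad Q q x = Q *v x - q"

definition quad_minimizer :: "real^'n^'n \<Rightarrow> real^'n \<Rightarrow> real^'n" where
  "quad_minimizer Q q = (THE x. \<forall>y. quad_fun Q q x \<le> quad_fun Q q y)"

fun tm_iter :: "real \<Rightarrow> real \<Rightarrow> real \<Rightarrow> real \<Rightarrow> real^'n^'n \<Rightarrow> real^'n \<Rightarrow>
     (nat \<Rightarrow> real^'n) \<Rightarrow> real^'n \<Rightarrow> real^'n \<Rightarrow> nat \<Rightarrow> real^'n" where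
  "tm_iter \<alpha> \<beta> \<gamma> \<sigma>w Q q ws x0 x1 0 = x0"
| "tm_iter \<alpha> \<beta> \<gamma> \<sigma>w Q q ws x0 x1 (Suc 0) = x1"
| "tm_iter \<alpha> \<beta> \<gamma> \<sigma>w Q q ws x0 x1 (Suc (Suc t)) =
     (let u = tm_iter \<alpha> \<beta> \<gamma> \<sigma>w Q q ws x0 x1 t;
          v = tm_iter \<alpha> \<beta> \<gamma> \<sigma>w Q q ws x0 x1 (Suc t)
      in v + \<beta> *\<^sub>R (v - u) - \<alpha> *\<^sub>R quad_grad Q q (v + \<gamma> *\<^sub>R (v - u)) + \<sigma>w *\<^sub>R ws t)"

definition white_noise :: "'w measure \<Rightarrow> (nat \<Rightarrow> 'w \<Rightarrow> real^'n) \<Rightarrow> bool" where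
  "white_noise M w \<longleftrightarrow>
     (\<forall>t i. (\<lambda>\<omega>. w t \<omega> $ i) \<in> borel_measurable M \<and> integrable M (\<lambda>\<omega>. (w t \<omega> $ i)^2)
            \<and> (\<integral>\<omega>. w t \<omega> $ i \<partial>M) = 0)
   \<and> (\<forall>t \<tau> i j. (\<integral>\<omega>. w t \<omega> $ i * w \<tau> \<omega> $ j \<partial>M) = (if t = \<tau> \<and> i = j then 1 else 0))"

definition avg_err :: "'w measure \<Rightarrow> (nat \<Rightarrow> 'w \<Rightarrow> real^'n) \<Rightarrow> real \<Rightarrow> real \<Rightarrow> real \<Rightarrow> real \<Rightarrow>
     real^'n^'n \<Rightarrow> real^'n \<Rightarrow> real^'n \<Rightarrow> real^'n \<Rightarrow> nat \<Rightarrow> real" where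
  "avg_err M w \<alpha> \<beta> \<gamma> \<sigma>w Q q x0 x1 t =
     (1 / real t) * (\<Sum>k\<le>t. \<integral>\<omega>. (norm (tm_iter \<alpha> \<beta> \<gamma> \<sigma>w Q q (\<lambda>s. w s \<omega>) x0 x1 k
                                         - quad_minimizer Q q))^2 \<partial>M)"

definition noise_amp :: "'w measure \<Rightarrow> (nat \<Rightarrow> 'w \<Rightarrow> real^'n) \<Rightarrow> real \<Rightarrow> real \<Rightarrow> real \<Rightarrow> real \<Rightarrow>
     real^'n^'n \<Rightarrow> real^'n \<Rightarrow> real^'n \<Rightarrow> real^'n \<Rightarrow> real" where
  "noise_amp M w \<alpha> \<beta> \<gamma> \<sigma>w Q q x0 x1 = lim (avg_err M w \<alpha> \<beta> \<gamma> \<sigma>w Q q x0 x1)"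

definition noise_amp_exists :: "'w measure \<Rightarrow> (nat \<Rightarrow> 'w \<Rightarrow> real^'n) \<Rightarrow> real \<Rightarrow> real \<Rightarrow> real \<Rightarrow> real \<Rightarrow>
     real \<Rightarrow> real \<Rightarrow> real^'n \<Rightarrow> real^'n \<Rightarrow> bool" where
  "noise_amp_exists M w \<alpha> \<beta> \<gamma> \<sigma>w m L x0 x1 \<longleftrightarrow>
     (\<forall>Q q. in_QmL m L Q \<longrightarrow> convergent (avg_err M w \<alpha> \<beta> \<gamma> \<sigma>w Q q x0 x1))"

definition noise_amp_set :: "'w measure \<Rightarrow> (nat \<Rightarrow> 'w \<Rightarrow> real^'n) \<Rightarrow> real \<Rightarrow> real \<Rightarrow> real \<Rightarrow> real \<Rightarrow>
     real \<Rightarrow> real \<Rightarrow> real^'n \<Rightarrow> real^'n \<Rightarrow> real set" where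
  "noise_amp_set M w \<alpha> \<beta> \<gamma> \<sigma>w m L x0 x1 =
     {noise_amp M w \<alpha> \<beta> \<gamma> \<sigma>w Q q x0 x1 | Q q. in_QmL m L Q}"

definition is_max_of :: "real set \<Rightarrow> real \<Rightarrow> bool" where
  "is_max_of S v \<longleftrightarrow> v \<in> S \<and> (\<forall>u\<in>S. u \<le> v)"

definition is_min_of :: "real set \<Rightarrow> real \<Rightarrow> bool" where
  "is_min_of S v \<longleftrightarrow> v \<in> S \<and> (\<forall>u\<in>S. v \<le> u)"

end

theory Submission
  imports Defs
begin

(*
  For gamma = 0 the iteration is linear in the noise. Writing the error x^k - x* in an
  orthonormal eigenbasis of Q, its coordinate y along an eigenvector u obeys the scalar recurrence
  y(k+2) = (1 + beta - alpha lambda) y(k+1) - beta y(k) + sigma_w u . w^k, so by variation of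
  constants its second moment is a decaying transient plus sigma_w^2 times a partial sum of the
  squared impulse response. A quadratic Lyapunov function shows that both are summable when the
  recurrence is stable, hence E |x^k - x*|^2 converges and Cesaro averaging gives
  J = sigma_w^2 (sum over the eigenvalues lambda of E(lambda)),
  E(lambda) = (1 + beta) / ((1 - beta) alpha lambda (2 (1 + beta) - alpha lambda)).
  The parameters of the theorem satisfy alpha (m + L) = 2 (1 + beta), so E(lambda) is the
  reciprocal of a parabola in lambda symmetric about (m + L)/2: it is largest at lambda = m and
  lambda = L and smallest at the midpoint. Since m and L are always eigenvalues, J is maximal for
  the spectrum {m, L, ..., L} and minimal for {m, L, (m + L)/2, ..., (m + L)/2}, both attained by
  diagonal matrices. What remains is algebra in rho and c.
*)

section \<open>Second-order linear recurrences\<close>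

fun lin_rec :: "real \<Rightarrow> real \<Rightarrow> real \<Rightarrow> real \<Rightarrow> nat \<Rightarrow> real" where
  "lin_rec a b y0 y1 0 = y0"
| "lin_rec a b y0 y1 (Suc 0) = y1"
| "lin_rec a b y0 y1 (Suc (Suc k)) = a * lin_rec a b y0 y1 (Suc k) + b * lin_rec a b y0 y1 k"

definition impulse_energy :: "real \<Rightarrow> real \<Rightarrow> real" where
  "impulse_energy a b = (1 - b) / ((1 + b) * ((1 - b)^2 - a^2))"

(* The solution of the discrete Lyapunov equation for the companion matrix [[a, b], [1, 0]],
   evaluated at the state (y(k+1), y(k)). *)
definition lyap_form :: "real \<Rightarrow> real \<Rightarrow> real \<Rightarrow> real \<Rightarrow> real" where
  "lyap_form a b x z = impulse_energy a b * x^2 + 2 * (impulse_energy a b * a * b / (1 - b)) * x * z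
     + (1 + impulse_energy a b * b^2) * z^2"

lemma abs_less_imp_power2_less:
  fixes a b :: real
  assumes "\<bar>a\<bar> < b"
  shows "a^2 < b^2"
  using power_strict_mono[of "\<bar>a\<bar>" b 2] assms by simp

lemma lyap_form_step:
  assumes "\<bar>b\<bar> < 1" "\<bar>a\<bar> < 1 - b"
  shows "lyap_form a b (a * x + b * z) x = lyap_form a b x z - z^2"
proof -
  define P where "P = impulse_energy a b"
  have "(1 - b)^2 - a^2 \<noteq> 0" using abs_less_imp_power2_less[OF assms(2)] by simp
  then have P: "P * (1 + b) * ((1 - b)^2 - a^2) = 1 - b"
    using assms(1) by (simp add: P_def impulse_energy_def)
  have "(1 - b) * lyap_form a b (a * x + b * z) x = (1 - b) * (lyap_form a b x z - z^2)"
    using assms(1) unfolding lyap_form_def P_def[symmetric]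
    by (simp add: field_simps) (use P in algebra)
  then show ?thesis using assms(1) by (simp add: abs_less_iff)
qed

lemma lyap_form_nonneg:
  assumes "\<bar>b\<bar> < 1" "\<bar>a\<bar> < 1 - b"
  shows "0 \<le> lyap_form a b x z"
proof -
  define P where "P = impulse_energy a b"
  define R where "R = P * a * b / (1 - b)"
  define S where "S = 1 + P * b^2"
  have a2: "a^2 < (1 - b)^2" by (rule abs_less_imp_power2_less[OF assms(2)])
  have b: "0 < 1 + b" "0 < 1 - b" using assms(1) by auto
  have P: "0 < P" unfolding P_def impulse_energy_def using a2 b by simp
  have "a^2 / (1 - b)^2 \<le> 1" using a2 b by simp
  then have "0 \<le> P + P^2 * b^2 * (1 - a^2 / (1 - b)^2)" using P by simp
  also have "P + P^2 * b^2 * (1 - a^2 / (1 - b)^2) = P * S - R^2"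
    unfolding R_def S_def using b by (simp add: field_simps power2_eq_square)
  finally have "0 \<le> (P * x + R * z)^2 + (P * S - R^2) * z^2" by simp
  also have "(P * x + R * z)^2 + (P * S - R^2) * z^2 = P * lyap_form a b x z"
    unfolding lyap_form_def P_def[symmetric] R_def[symmetric] S_def[symmetric]
    by (simp add: algebra_simps power2_eq_square)
  finally show ?thesis using P by (simp add: zero_le_mult_iff)
qed

lemma sums_power2_lin_rec:
  assumes "\<bar>b\<bar> < 1" "\<bar>a\<bar> < 1 - b"
  shows "(\<lambda>k. (lin_rec a b y0 y1 k)^2) sums lyap_form a b y1 y0"
proof -
  let ?y = "lin_rec a b y0 y1"
  let ?V = "\<lambda>N. lyap_form a b (?y (Suc N)) (?y N)"
  have telescope: "(\<Sum>k<N. (?y k)^2) = ?V 0 - ?V N" for N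
  proof (induction N)
    case (Suc N)
    have "?V (Suc N) = ?V N - (?y N)^2"
      using lyap_form_step[OF assms] by simp
    then show ?case using Suc by simp
  qed simp
  have "summable (\<lambda>k. (?y k)^2)"
  proof (rule summableI_nonneg_bounded)
    show "(\<Sum>k<N. (?y k)^2) \<le> ?V 0" for N
      unfolding telescope using lyap_form_nonneg[OF assms] by simp
  qed simp
  then have "(\<lambda>k. (?y k)^2) \<longlonglongrightarrow> 0" by (rule summable_LIMSEQ_zero)
  then have y: "?y \<longlonglongrightarrow> 0" by (metis power_tendsto_0_iff zero_less_numeral)
  have "?V \<longlonglongrightarrow> lyap_form a b 0 0"
    unfolding lyap_form_def by (intro tendsto_intros LIMSEQ_Suc[OF y] y)
  then have "(\<lambda>N. ?V 0 - ?V N) \<longlonglongrightarrow> ?V 0"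
    using tendsto_diff[OF tendsto_const] by (fastforce simp: lyap_form_def)
  then show ?thesis unfolding sums_def telescope by simp
qed

lemma sums_power2_impulse_response:
  assumes "\<bar>b\<bar> < 1" "\<bar>a\<bar> < 1 - b"
  shows "(\<lambda>k. (lin_rec a b 0 1 k)^2) sums impulse_energy a b"
  using sums_power2_lin_rec[OF assms, of 0 1] by (simp add: lyap_form_def)

lemma lin_rec_variation_of_constants:
  fixes y g :: "nat \<Rightarrow> real"
  assumes "\<And>k. y (Suc (Suc k)) = a * y (Suc k) + b * y k + g k"
  shows "y k = lin_rec a b (y 0) (y 1) k + (\<Sum>s<k. lin_rec a b 0 1 (k - 1 - s) * g s)"
proof (induction k rule: induct_nat_012)
  case (ge2 k)
  let ?h = "lin_rec a b 0 1"
  have shift: "(\<Sum>s<k. ?h (Suc k - s) * g s)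
      = a * (\<Sum>s<k. ?h (k - s) * g s) + b * (\<Sum>s<k. ?h (k - 1 - s) * g s)"
  proof -
    have "?h (Suc k - s) = a * ?h (k - s) + b * ?h (k - 1 - s)" if "s < k" for s
    proof -
      have "Suc k - s = Suc (Suc (k - 1 - s))" "k - s = Suc (k - 1 - s)" using that by auto
      then show ?thesis by simp
    qed
    then have "(\<Sum>s<k. ?h (Suc k - s) * g s)
        = (\<Sum>s<k. a * (?h (k - s) * g s) + b * (?h (k - 1 - s) * g s))"
      by (intro sum.cong) (simp_all add: algebra_simps)
    then show ?thesis by (simp add: sum.distrib sum_distrib_left)
  qed
  show ?case
    using assms[of k] ge2 shift by (simp add: algebra_simps)
qed simp_all

section \<open>Symmetric matrices\<close>

lemma inner_matrix_symmetric:
  fixes Q :: "real^'n^'n"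
  assumes "transpose Q = Q"
  shows "x \<bullet> (Q *v y) = (Q *v x) \<bullet> y"
  by (metis assms dot_lmul_matrix vector_transpose_matrix)

lemma nonpos_if_le_quadratic:
  fixes a b :: real
  assumes "\<And>t. 0 < t \<Longrightarrow> a * t \<le> b * t^2"
  shows "a \<le> 0"
proof (rule ccontr)
  assume "\<not> a \<le> 0"
  define t where "t = a / (\<bar>b\<bar> + 1)"
  have t: "0 < t" using \<open>\<not> a \<le> 0\<close> by (simp add: t_def add_pos_nonneg)
  have "a \<le> b * t" using assms[OF t] t by (simp add: power2_eq_square)
  also have "\<dots> \<le> \<bar>b\<bar> * t" using t by (simp add: mult_right_mono)
  also have "\<dots> < a" using \<open>\<not> a \<le> 0\<close> by (simp add: t_def field_simps)
  finally show False by simp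
qed

lemma subspace_rayleigh_max:
  fixes Q :: "real^'n^'n"
  assumes S: "subspace S" and x: "x \<in> S" "x \<noteq> 0"
  obtains u where "u \<in> S" "norm u = 1" "\<And>y. y \<in> S \<Longrightarrow> y \<bullet> (Q *v y) \<le> (u \<bullet> (Q *v u)) * (y \<bullet> y)"
proof -
  let ?K = "sphere 0 1 \<inter> S"
  have "compact ?K" using closed_subspace[OF S] by (intro compact_Int_closed) auto
  moreover have "x /\<^sub>R norm x \<in> ?K" using x S by (simp add: subspace_scale)
  moreover have "continuous_on ?K (\<lambda>y. y \<bullet> (Q *v y))"
    by (intro continuous_intros linear_continuous_on matrix_vector_mul_bounded_linear)
  ultimately obtain u where u: "u \<in> ?K" and max: "\<And>y. y \<in> ?K \<Longrightarrow> y \<bullet> (Q *v y) \<le> u \<bullet> (Q *v u)"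
    using continuous_attains_sup[of ?K] by blast
  have "y \<bullet> (Q *v y) \<le> (u \<bullet> (Q *v u)) * (y \<bullet> y)" if "y \<in> S" for y
  proof (cases "y = 0")
    case False
    then have "y /\<^sub>R norm y \<in> ?K" using that S by (simp add: subspace_scale)
    then have "(y /\<^sub>R norm y) \<bullet> (Q *v (y /\<^sub>R norm y)) \<le> u \<bullet> (Q *v u)" by (rule max)
    then have "(y \<bullet> (Q *v y)) / (norm y)^2 \<le> u \<bullet> (Q *v u)"
      by (simp add: matrix_vector_mult_scaleR power2_eq_square divide_inverse mult_ac)
    then show ?thesis using False by (simp add: divide_le_eq power2_norm_eq_inner)
  qed simp
  then show thesis using that u by auto
qed

lemma rayleigh_max_eigenvector:
  fixes Q :: "real^'n^'n"
  assumes sym: "transpose Q = Q" and S: "subspace S" and inv: "\<And>x. x \<in> S \<Longrightarrow> Q *v x \<in> S"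
    and u: "u \<in> S" "norm u = 1"
    and max: "\<And>y. y \<in> S \<Longrightarrow> y \<bullet> (Q *v y) \<le> (u \<bullet> (Q *v u)) * (y \<bullet> y)"
  shows "Q *v u = (u \<bullet> (Q *v u)) *\<^sub>R u"
proof -
  define \<mu> where "\<mu> = u \<bullet> (Q *v u)"
  define v where "v = Q *v u - \<mu> *\<^sub>R u"
  have uu: "u \<bullet> u = 1" using u(2) by (simp add: norm_eq_1)
  have vS: "v \<in> S" unfolding v_def using u inv S by (simp add: subspace_diff subspace_scale)
  have uv: "u \<bullet> v = 0" unfolding v_def using uu by (simp add: inner_diff_right \<mu>_def)
  have Quv: "(Q *v u) \<bullet> v = v \<bullet> v" "u \<bullet> (Q *v v) = v \<bullet> v"
    using uv inner_matrix_symmetric[OF sym, of u v]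
    by (simp_all add: v_def inner_diff_left inner_diff_right inner_commute)
  \<comment> \<open>Perturbing the maximiser u along v \<bottom> u gives the quadratic inequality
      2 t |v|^2 \<le> t^2 (\<mu> |v|^2 - v \<bullet> Q v) for every t.\<close>
  have "2 * (v \<bullet> v) * t \<le> (\<mu> * (v \<bullet> v) - v \<bullet> (Q *v v)) * t^2" for t
  proof -
    have "u + t *\<^sub>R v \<in> S" using u vS S by (simp add: subspace_add subspace_scale)
    from max[OF this] show ?thesis
      using uu uv Quv inner_matrix_symmetric[OF sym, of v u]
      by (simp add: algebra_simps inner_add_left inner_add_right inner_commute \<mu>_def power2_eq_square)
  qed
  then have "2 * (v \<bullet> v) \<le> 0" by (rule nonpos_if_le_quadratic)
  then have "v \<bullet> v = 0" using inner_ge_zero[of v] by linarith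
  then have "v = 0" by simp
  then show ?thesis by (simp add: v_def \<mu>_def)
qed

definition orthonormal_eigenvectors :: "real^'n^'n \<Rightarrow> (real^'n) set \<Rightarrow> bool" where
  "orthonormal_eigenvectors Q B \<longleftrightarrow>
     pairwise orthogonal B \<and> (\<forall>u\<in>B. norm u = 1 \<and> Q *v u = (u \<bullet> (Q *v u)) *\<^sub>R u)"

lemma orthonormal_eigenvectors_extend:
  fixes Q :: "real^'n^'n"
  assumes sym: "transpose Q = Q" and B: "orthonormal_eigenvectors Q B" "finite B"
    and card: "card B < CARD('n)"
  obtains v where "v \<notin> B" "orthonormal_eigenvectors Q (insert v B)"
proof -
  define S where "S = {y. \<forall>u\<in>B. orthogonal u y}"
  have S: "subspace S" unfolding S_def by (rule subspace_orthogonal_to_vectors)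
  have "span B \<noteq> UNIV"
  proof
    assume "span B = UNIV"
    then have "dim (UNIV :: (real^'n) set) \<le> card B" using B(2) by (intro dim_le_card) auto
    then show False using card by simp
  qed
  then obtain x where x: "x \<noteq> 0" "\<And>y. y \<in> span B \<Longrightarrow> orthogonal x y"
    by (metis orthogonal_to_subspace_exists_gen span_UNIV subset_UNIV psubsetI)
  have "x \<in> S" unfolding S_def using x(2) span_base by (auto simp: orthogonal_commute)
  have inv: "Q *v y \<in> S" if "y \<in> S" for y
  proof -
    have "u \<bullet> (Q *v y) = (u \<bullet> (Q *v u)) * (u \<bullet> y)" if "u \<in> B" for u
      using B(1) that inner_matrix_symmetric[OF sym, of u y] unfolding orthonormal_eigenvectors_def
      by (metis inner_scaleR_left)
    then show ?thesis using \<open>y \<in> S\<close> unfolding S_def orthogonal_def by simp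
  qed
  obtain v where v: "v \<in> S" "norm v = 1" "\<And>y. y \<in> S \<Longrightarrow> y \<bullet> (Q *v y) \<le> (v \<bullet> (Q *v v)) * (y \<bullet> y)"
    using subspace_rayleigh_max[OF S \<open>x \<in> S\<close> x(1)] by blast
  have "v \<notin> B"
  proof
    assume "v \<in> B"
    then have "orthogonal v v" using v(1) unfolding S_def by auto
    then show False using v(2) by (simp add: orthogonal_def)
  qed
  moreover have "orthonormal_eigenvectors Q (insert v B)"
    using B(1) v rayleigh_max_eigenvector[OF sym S inv v(1,2) v(3)]
    unfolding orthonormal_eigenvectors_def S_def
    by (auto simp: pairwise_insert orthogonal_commute)
  ultimately show thesis by (rule that)
qed

lemma symmetric_matrix_orthonormal_eigenbasis:
  fixes Q :: "real^'n^'n"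
  assumes sym: "transpose Q = Q"
  obtains B where "orthonormal_eigenvectors Q B" "finite B" "card B = CARD('n)" "span B = UNIV"
proof -
  have "\<exists>B. orthonormal_eigenvectors Q B \<and> finite B \<and> card B = k" if "k \<le> CARD('n)" for k
    using that
  proof (induction k)
    case 0
    then show ?case by (intro exI[of _ "{}"]) (simp add: orthonormal_eigenvectors_def)
  next
    case (Suc k)
    then obtain B where B: "orthonormal_eigenvectors Q B" "finite B" "card B = k" by auto
    with Suc.prems obtain v where "v \<notin> B" "orthonormal_eigenvectors Q (insert v B)"
      using orthonormal_eigenvectors_extend[OF sym] by (metis Suc_le_eq)
    then show ?case using B by (intro exI[of _ "insert v B"]) simp
  qed
  then obtain B where B: "orthonormal_eigenvectors Q B" "finite B" "card B = CARD('n)" by blast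
  have "independent B"
    using B(1) unfolding orthonormal_eigenvectors_def
    by (metis norm_zero pairwise_orthogonal_independent zero_neq_one)
  then have "dim B = DIM(real^'n)" using B(3) by (simp add: dim_span_eq_card_independent[symmetric])
  then have "span B = UNIV" by (rule dim_eq_full[THEN iffD1])
  with B show thesis by (rule that)
qed

lemma norm_power2_orthonormal_basis:
  fixes B :: "'a::euclidean_space set"
  assumes "pairwise orthogonal B" "\<And>u. u \<in> B \<Longrightarrow> norm u = 1" "finite B" "span B = UNIV"
  shows "(norm x)^2 = (\<Sum>u\<in>B. (u \<bullet> x)^2)"
proof -
  have "x \<bullet> x = x \<bullet> (\<Sum>u\<in>B. (x \<bullet> u) *\<^sub>R u)"
    using orthonormal_basis_expand[of B x] assms by simp
  also have "\<dots> = (\<Sum>u\<in>B. (u \<bullet> x)^2)"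
    by (simp add: inner_sum_right power2_eq_square inner_commute)
  finally show ?thesis by (simp add: power2_norm_eq_inner)
qed

lemma mat_eigenvalue_rayleigh:
  assumes "orthonormal_eigenvectors Q B" "u \<in> B"
  shows "mat_eigenvalue Q (u \<bullet> (Q *v u))"
  using assms unfolding orthonormal_eigenvectors_def mat_eigenvalue_def scalar_mult_eq_scaleR
  by (metis norm_zero zero_neq_one)

lemma mat_eigenvalue_in_orthonormal_eigenbasis:
  fixes Q :: "real^'n^'n"
  assumes sym: "transpose Q = Q" and B: "orthonormal_eigenvectors Q B" "finite B" "span B = UNIV"
    and "mat_eigenvalue Q \<mu>"
  shows "\<exists>u\<in>B. u \<bullet> (Q *v u) = \<mu>"
proof (rule ccontr)
  assume none: "\<not> (\<exists>u\<in>B. u \<bullet> (Q *v u) = \<mu>)"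
  obtain v where v: "v \<noteq> 0" "Q *v v = \<mu> *\<^sub>R v"
    using \<open>mat_eigenvalue Q \<mu>\<close> unfolding mat_eigenvalue_def scalar_mult_eq_scaleR by blast
  \<comment> \<open>Eigenvectors of a symmetric matrix for distinct eigenvalues are orthogonal.\<close>
  have "v \<bullet> u = 0" if "u \<in> B" for u
  proof -
    have "Q *v u = (u \<bullet> (Q *v u)) *\<^sub>R u" using B(1) that unfolding orthonormal_eigenvectors_def by blast
    then have "\<mu> * (u \<bullet> v) = (u \<bullet> (Q *v u)) * (u \<bullet> v)"
      using inner_matrix_symmetric[OF sym, of u v] v(2) by (metis inner_scaleR_left inner_scaleR_right)
    then show ?thesis using none that by (auto simp: inner_commute)
  qed
  then have "(\<Sum>u\<in>B. (v \<bullet> u) *\<^sub>R u) = 0" by simp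
  moreover have "(\<Sum>u\<in>B. (v \<bullet> u) *\<^sub>R u) = v"
    using B unfolding orthonormal_eigenvectors_def by (intro orthonormal_basis_expand) auto
  ultimately show False using v(1) by simp
qed

lemma in_QmL_eigenbasis:
  fixes Q :: "real^'n^'n"
  assumes Q: "in_QmL m L Q"
  obtains B where "orthonormal_eigenvectors Q B" "finite B" "card B = CARD('n)" "span B = UNIV"
    "\<And>u. u \<in> B \<Longrightarrow> m \<le> u \<bullet> (Q *v u) \<and> u \<bullet> (Q *v u) \<le> L"
    "\<exists>u\<in>B. u \<bullet> (Q *v u) = m" "\<exists>u\<in>B. u \<bullet> (Q *v u) = L"
proof -
  have sym: "transpose Q = Q" using Q unfolding in_QmL_def by blast
  obtain B where B: "orthonormal_eigenvectors Q B" "finite B" "card B = CARD('n)" "span B = UNIV"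
    using symmetric_matrix_orthonormal_eigenbasis[OF sym] by blast
  show thesis
  proof (rule that[OF B])
    show "m \<le> u \<bullet> (Q *v u) \<and> u \<bullet> (Q *v u) \<le> L" if "u \<in> B" for u
      using mat_eigenvalue_rayleigh[OF B(1) that] Q unfolding in_QmL_def by blast
    show "\<exists>u\<in>B. u \<bullet> (Q *v u) = m" "\<exists>u\<in>B. u \<bullet> (Q *v u) = L"
      using Q mat_eigenvalue_in_orthonormal_eigenbasis[OF sym B(1,2,4)] unfolding in_QmL_def by blast+
  qed
qed

lemma quad_minimizer_solves:
  fixes Q :: "real^'n^'n"
  assumes sym: "transpose Q = Q" and pd: "\<And>x. x \<noteq> 0 \<Longrightarrow> 0 < x \<bullet> (Q *v x)"
  shows "Q *v quad_minimizer Q q = q"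
proof -
  have "inj ((*v) Q)"
  proof (rule injI)
    fix x y assume "Q *v x = Q *v y"
    then have "(x - y) \<bullet> (Q *v (x - y)) = 0" by (simp add: matrix_vector_mult_diff_distrib)
    then show "x = y" using pd[of "x - y"] by force
  qed
  then have "surj ((*v) Q)" by (simp add: linear_injective_imp_surjective)
  then obtain z where z: "Q *v z = q" by (metis surjD)
  have gap: "quad_fun Q q y - quad_fun Q q z = (1/2) * ((y - z) \<bullet> (Q *v (y - z)))" for y
    using inner_matrix_symmetric[OF sym, of z y] unfolding quad_fun_def z[symmetric]
    by (simp add: matrix_vector_mult_diff_distrib inner_diff_left inner_diff_right inner_commute algebra_simps)
  have "quad_minimizer Q q = z" unfolding quad_minimizer_def
  proof (rule the_equality)
    show "\<forall>y. quad_fun Q q z \<le> quad_fun Q q y"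
    proof
      fix y
      have "0 \<le> (y - z) \<bullet> (Q *v (y - z))" using pd[of "y - z"] by (cases "y = z") auto
      then show "quad_fun Q q z \<le> quad_fun Q q y" using gap[of y] by simp
    qed
  next
    fix y assume "\<forall>x. quad_fun Q q y \<le> quad_fun Q q x"
    then have "quad_fun Q q y \<le> quad_fun Q q z" by blast
    then have "(y - z) \<bullet> (Q *v (y - z)) \<le> 0" using gap[of y] by simp
    then show "y = z" using pd[of "y - z"] by force
  qed
  then show ?thesis using z by simp
qed

definition diag_mat :: "('n::finite \<Rightarrow> real) \<Rightarrow> real^'n^'n" where
  "diag_mat d = (\<chi> i j. if i = j then d i else 0)"

lemma diag_mat_mult_vec: "diag_mat d *v x = (\<chi> i. d i * x $ i)"
proof -
  have "(\<Sum>j\<in>UNIV. (if i = j then d i else 0) * x $ j) = d i * x $ i" for i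
    by (simp add: if_distrib[of "\<lambda>t. t * _"] cong: if_cong)
  then show ?thesis by (simp add: diag_mat_def matrix_vector_mult_def vec_eq_iff)
qed

lemma transpose_diag_mat: "transpose (diag_mat d) = diag_mat d"
  by (simp add: diag_mat_def transpose_def vec_eq_iff)

lemma diag_mat_mult_axis: "diag_mat d *v axis i 1 = d i *\<^sub>R axis i 1"
  by (simp add: diag_mat_mult_vec vec_eq_iff axis_def)

lemma mat_eigenvalue_diag_mat_iff: "mat_eigenvalue (diag_mat d) \<mu> \<longleftrightarrow> (\<exists>i. \<mu> = d i)"
proof
  assume "mat_eigenvalue (diag_mat d) \<mu>"
  then obtain v where v: "v \<noteq> 0" "diag_mat d *v v = \<mu> *s v" unfolding mat_eigenvalue_def by blast
  obtain i where "v $ i \<noteq> 0" using v(1) by (metis vec_eq_iff zero_index)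
  moreover have "d i * v $ i = \<mu> * v $ i" using v(2) by (simp add: diag_mat_mult_vec vec_eq_iff)
  ultimately show "\<exists>i. \<mu> = d i" by auto
next
  assume "\<exists>i. \<mu> = d i"
  then obtain i where "\<mu> = d i" by blast
  moreover have "axis i (1::real) \<noteq> 0" by (simp add: axis_eq_0_iff)
  ultimately show "mat_eigenvalue (diag_mat d) \<mu>"
    unfolding mat_eigenvalue_def scalar_mult_eq_scaleR by (metis diag_mat_mult_axis)
qed

lemma in_QmL_diag_mat:
  fixes d :: "'n::finite \<Rightarrow> real"
  assumes m: "0 < m" and d: "\<And>i. m \<le> d i \<and> d i \<le> L" "d i\<^sub>m = m" "d i\<^sub>L = L"
  shows "in_QmL m L (diag_mat d)"
  unfolding in_QmL_def mat_eigenvalue_diag_mat_iff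
proof (intro conjI allI impI)
  fix x :: "real^'n" assume "x \<noteq> 0"
  then obtain i where i: "x $ i \<noteq> 0" by (metis vec_eq_iff zero_index)
  have pos: "0 < d j" for j using m d(1)[of j] by linarith
  have "0 < d i * (x $ i)^2" using i pos[of i] by simp
  also have "\<dots> \<le> (\<Sum>j\<in>UNIV. d j * (x $ j)^2)"
    using pos by (intro member_le_sum) (simp_all add: less_imp_le)
  also have "\<dots> = x \<bullet> (diag_mat d *v x)"
    by (simp add: diag_mat_mult_vec inner_vec_def power2_eq_square mult_ac)
  finally show "0 < x \<bullet> (diag_mat d *v x)" .
qed (use d in \<open>auto simp: transpose_diag_mat\<close>)

lemma orthonormal_eigenvectors_diag_mat:
  "orthonormal_eigenvectors (diag_mat d) (range (\<lambda>i. axis i 1))"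
  by (auto simp: orthonormal_eigenvectors_def pairwise_def orthogonal_def inner_axis_axis
      diag_mat_mult_axis norm_eq_1)

lemma span_range_axis: "span (range (\<lambda>i::'n::finite. axis i (1::real))) = UNIV"
proof -
  have "range (\<lambda>i::'n. axis i (1::real)) = Basis" unfolding Basis_vec_def by auto
  then show ?thesis by simp
qed

section \<open>Noise propagation through the momentum iteration\<close>

lemma cesaro_mean_tendsto:
  fixes a :: "nat \<Rightarrow> real"
  assumes a: "a \<longlonglongrightarrow> l"
  shows "(\<lambda>t. (1 / real t) * (\<Sum>k\<le>t. a k)) \<longlonglongrightarrow> l"
proof -
  have zero: "(\<lambda>t. (\<Sum>k\<le>t. b k) / real t) \<longlonglongrightarrow> 0" if b: "b \<longlonglongrightarrow> 0" for b :: "nat \<Rightarrow> real"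
  proof (rule LIMSEQ_I)
    fix r :: real assume "0 < r"
    then obtain N where N: "\<And>k. N \<le> k \<Longrightarrow> \<bar>b k\<bar> < r / 4"
      using LIMSEQ_D[OF b, of "r / 4"] by auto
    define C where "C = (\<Sum>k<N. \<bar>b k\<bar>)"
    obtain T :: nat where T: "2 * C / r < T" using reals_Archimedean2 by blast
    have "\<bar>(\<Sum>k\<le>t. b k) / real t\<bar> < r" if t: "max (max N T) 1 \<le> t" for t
    proof -
      \<comment> \<open>The first N terms contribute at most C, the others at most r/4 each.\<close>
      have "{..t} = {..<N} \<union> {N..t}" using t by auto
      then have "\<bar>\<Sum>k\<le>t. b k\<bar> \<le> C + (\<Sum>k\<in>{N..t}. \<bar>b k\<bar>)"
        unfolding C_def by (metis sum_abs sum.union_disjoint finite_lessThan finite_atLeastAtMost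
            ivl_disj_int_one(4) lessThan_atLeast0)
      also have "(\<Sum>k\<in>{N..t}. \<bar>b k\<bar>) \<le> real (card {N..t}) * (r / 4)"
        using N by (intro sum_bounded_above) (simp add: less_imp_le)
      also have "real (card {N..t}) * (r / 4) \<le> (2 * real t) * (r / 4)"
        using t \<open>0 < r\<close> by (intro mult_right_mono) auto
      also have "2 * C / r < real t" using T t by linarith
      then have "C < real t * (r / 2)" using \<open>0 < r\<close> by (simp add: field_simps)
      finally show ?thesis using t by (simp add: abs_div divide_less_eq)
    qed
    then show "\<exists>T. \<forall>t\<ge>T. norm ((\<Sum>k\<le>t. b k) / real t - 0) < r"
      by (intro exI[of _ "max (max N T) 1"]) auto
  qed
  have "(\<lambda>t. (\<Sum>k\<le>t. a k - l) / real t + (1 + 1 / real t) * l) \<longlonglongrightarrow> 0 + (1 + 0) * l"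
    using a by (intro tendsto_intros zero lim_inverse_n') (simp add: LIM_zero)
  moreover have "\<forall>\<^sub>F t in sequentially.
      (\<Sum>k\<le>t. a k - l) / real t + (1 + 1 / real t) * l = (1 / real t) * (\<Sum>k\<le>t. a k)"
    using eventually_gt_at_top[of 0] by eventually_elim (simp add: sum_subtractf field_simps)
  ultimately show ?thesis by (simp add: Lim_transform_eventually)
qed

lemma inner_tm_iter_eigenvector:
  fixes Q :: "real^'n^'n"
  assumes sym: "transpose Q = Q" and xs: "Q *v xs = q" and u: "Q *v u = l *\<^sub>R u"
  shows "u \<bullet> (tm_iter \<alpha> \<beta> 0 \<sigma>w Q q ws x0 x1 k - xs)
    = lin_rec (1 + \<beta> - \<alpha> * l) (-\<beta>) (u \<bullet> (x0 - xs)) (u \<bullet> (x1 - xs)) k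
      + \<sigma>w * (\<Sum>s<k. lin_rec (1 + \<beta> - \<alpha> * l) (-\<beta>) 0 1 (k - 1 - s) * (u \<bullet> ws s))"
proof -
  let ?y = "\<lambda>k. u \<bullet> (tm_iter \<alpha> \<beta> 0 \<sigma>w Q q ws x0 x1 k - xs)"
  have "?y (Suc (Suc k)) = (1 + \<beta> - \<alpha> * l) * ?y (Suc k) + (-\<beta>) * ?y k + \<sigma>w * (u \<bullet> ws k)" for k
  proof -
    define V where "V = tm_iter \<alpha> \<beta> 0 \<sigma>w Q q ws x0 x1 (Suc k)"
    define U where "U = tm_iter \<alpha> \<beta> 0 \<sigma>w Q q ws x0 x1 k"
    define G where "G = Q *v V - q"
    have step: "tm_iter \<alpha> \<beta> 0 \<sigma>w Q q ws x0 x1 (Suc (Suc k)) = V + \<beta> *\<^sub>R (V - U) - \<alpha> *\<^sub>R G + \<sigma>w *\<^sub>R ws k"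
      by (simp add: V_def U_def G_def Let_def quad_grad_def)
    have G: "u \<bullet> G = l * (u \<bullet> V - u \<bullet> xs)"
      using inner_matrix_symmetric[OF sym, of u "V - xs"] u xs
      by (simp add: G_def matrix_vector_mult_diff_distrib inner_diff_right right_diff_distrib)
    show ?thesis
      unfolding step V_def[symmetric] U_def[symmetric] inner_add_right inner_diff_right inner_scaleR_right G
      by (simp add: algebra_simps)
  qed
  then have "?y k = lin_rec (1 + \<beta> - \<alpha> * l) (-\<beta>) (?y 0) (?y 1) k
      + (\<Sum>s<k. lin_rec (1 + \<beta> - \<alpha> * l) (-\<beta>) 0 1 (k - 1 - s) * (\<sigma>w * (u \<bullet> ws s)))"
    by (rule lin_rec_variation_of_constants)
  then show ?thesis by (simp add: sum_distrib_left mult_ac)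
qed

locale white_noise_space = prob_space M for M :: "'a measure" +
  fixes w :: "nat \<Rightarrow> 'a \<Rightarrow> real^'n"
  assumes white_noise: "white_noise M w"
begin

definition sq_integrable :: "('a \<Rightarrow> real) \<Rightarrow> bool" where
  "sq_integrable f \<longleftrightarrow> f \<in> borel_measurable M \<and> integrable M (\<lambda>x. (f x)^2)"

lemma sq_integrable_mult_integrable:
  assumes f: "sq_integrable f" and g: "sq_integrable g"
  shows "integrable M (\<lambda>x. f x * g x)"
proof (rule Bochner_Integration.integrable_bound)
  show "integrable M (\<lambda>x. (f x)^2 + (g x)^2)" using f g unfolding sq_integrable_def by simp
  show "(\<lambda>x. f x * g x) \<in> borel_measurable M" using f g unfolding sq_integrable_def by auto
  have "\<bar>a * b\<bar> \<le> a^2 + b^2" for a b :: real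
  proof -
    have "2 * (\<bar>a\<bar> * \<bar>b\<bar>) \<le> \<bar>a\<bar>^2 + \<bar>b\<bar>^2"
      by (rule sum_squares_bound[of "\<bar>a\<bar>" "\<bar>b\<bar>", unfolded mult.assoc])
    moreover have "0 \<le> \<bar>a\<bar> * \<bar>b\<bar>" by simp
    ultimately show ?thesis unfolding abs_mult power2_abs by linarith
  qed
  then show "AE x in M. norm (f x * g x) \<le> norm ((f x)^2 + (g x)^2)" by simp
qed

lemma sq_integrable_const: "sq_integrable (\<lambda>x. c)"
  by (simp add: sq_integrable_def)

lemma sq_integrable_integrable: "sq_integrable f \<Longrightarrow> integrable M f"
  using sq_integrable_mult_integrable[of f "\<lambda>x. 1"] sq_integrable_const by simp

lemma sq_integrable_add:
  assumes f: "sq_integrable f" and g: "sq_integrable g"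
  shows "sq_integrable (\<lambda>x. f x + g x)"
proof -
  have "integrable M (\<lambda>x. (f x)^2 + 2 * (f x * g x) + (g x)^2)"
    using f g sq_integrable_mult_integrable[OF f g] unfolding sq_integrable_def by simp
  moreover have "(\<lambda>x. (f x + g x)^2) = (\<lambda>x. (f x)^2 + 2 * (f x * g x) + (g x)^2)"
    by (simp add: power2_sum algebra_simps)
  ultimately show ?thesis using f g unfolding sq_integrable_def by auto
qed

lemma sq_integrable_cmult: "sq_integrable f \<Longrightarrow> sq_integrable (\<lambda>x. c * f x)"
  by (auto simp: sq_integrable_def power_mult_distrib)

lemma sq_integrable_sum: "(\<And>i. i \<in> I \<Longrightarrow> sq_integrable (f i)) \<Longrightarrow> sq_integrable (\<lambda>x. \<Sum>i\<in>I. f i x)"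
  by (induction I rule: infinite_finite_induct) (simp_all add: sq_integrable_const sq_integrable_add)

lemma sq_integrable_inner_noise: "sq_integrable (\<lambda>x. u \<bullet> w t x)"
proof -
  have "sq_integrable (\<lambda>x. w t x $ i)" for i
    using white_noise unfolding white_noise_def sq_integrable_def by blast
  then show ?thesis
    unfolding inner_vec_def inner_real_def by (intro sq_integrable_sum sq_integrable_cmult)
qed

lemma integral_inner_noise: "(\<integral>x. u \<bullet> w t x \<partial>M) = 0"
proof -
  have "integrable M (\<lambda>x. w t x $ i)" "(\<integral>x. w t x $ i \<partial>M) = 0" for i
    using white_noise unfolding white_noise_def by (auto intro: square_integrable_imp_integrable)
  then show ?thesis unfolding inner_vec_def inner_real_def by simp
qed

lemma integral_noise_mult:
  "(\<integral>x. w t x $ i * w s x $ j \<partial>M) = (if t = s \<and> i = j then 1 else 0)"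
  using white_noise unfolding white_noise_def by blast

lemma integral_inner_noise_mult:
  assumes "norm u = 1"
  shows "(\<integral>x. (u \<bullet> w t x) * (u \<bullet> w s x) \<partial>M) = (if t = s then 1 else 0)"
proof -
  have "(\<lambda>x. (u \<bullet> w t x) * (u \<bullet> w s x)) = (\<lambda>x. \<Sum>i\<in>UNIV. \<Sum>j\<in>UNIV. (u $ i * u $ j) * (w t x $ i * w s x $ j))"
    unfolding inner_vec_def inner_real_def sum_product by (simp add: mult_ac)
  moreover have "integrable M (\<lambda>x. w t x $ i * w s x $ j)" for i j
    using white_noise unfolding white_noise_def
    by (intro sq_integrable_mult_integrable) (auto simp: sq_integrable_def)
  ultimately have "(\<integral>x. (u \<bullet> w t x) * (u \<bullet> w s x) \<partial>M)
      = (\<Sum>i\<in>UNIV. \<Sum>j\<in>UNIV. (u $ i * u $ j) * (\<integral>x. w t x $ i * w s x $ j \<partial>M))"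
    by simp
  also have "\<dots> = (if t = s then u \<bullet> u else 0)"
    unfolding inner_vec_def inner_real_def by (simp add: integral_noise_mult if_distrib cong: if_cong)
  finally show ?thesis using assms by (simp add: norm_eq_1)
qed

lemma second_moment_noise_response:
  fixes c :: "nat \<Rightarrow> real" and k :: nat and D \<sigma> :: real
  assumes "norm u = 1"
  defines "N \<equiv> \<lambda>x. \<Sum>s<k. c s * (u \<bullet> w s x)"
  shows "sq_integrable (\<lambda>x. D + \<sigma> * N x)"
    and "(\<integral>x. (D + \<sigma> * N x)^2 \<partial>M) = D^2 + \<sigma>^2 * (\<Sum>s<k. (c s)^2)"
proof -
  have sN: "sq_integrable N"
    unfolding N_def by (intro sq_integrable_sum sq_integrable_cmult sq_integrable_inner_noise)
  then show "sq_integrable (\<lambda>x. D + \<sigma> * N x)"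
    by (intro sq_integrable_add sq_integrable_const sq_integrable_cmult)
  have EN: "(\<integral>x. N x \<partial>M) = 0"
    unfolding N_def using sq_integrable_integrable[OF sq_integrable_inner_noise]
    by (simp add: integral_inner_noise)
  have "(\<integral>x. (u \<bullet> w s x) * N x \<partial>M) = c s" if "s < k" for s
  proof -
    have "(\<integral>x. (u \<bullet> w s x) * N x \<partial>M) = (\<Sum>t<k. c t * (\<integral>x. (u \<bullet> w s x) * (u \<bullet> w t x) \<partial>M))"
      unfolding N_def sum_distrib_left
      using sq_integrable_mult_integrable[OF sq_integrable_inner_noise sq_integrable_inner_noise]
      by (simp add: mult.left_commute)
    also have "\<dots> = c s" using that by (simp add: integral_inner_noise_mult[OF assms(1)] if_distrib cong: if_cong)
    finally show ?thesis .
  qed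
  then have ENN: "(\<integral>x. N x * N x \<partial>M) = (\<Sum>s<k. (c s)^2)"
    using sq_integrable_mult_integrable[OF sq_integrable_inner_noise sN]
    by (simp add: N_def sum_distrib_right mult.assoc power2_eq_square)
  have "(\<lambda>x. (D + \<sigma> * N x)^2) = (\<lambda>x. D^2 + (2 * D * \<sigma>) * N x + \<sigma>^2 * (N x * N x))"
    by (simp add: power2_eq_square algebra_simps)
  then show "(\<integral>x. (D + \<sigma> * N x)^2 \<partial>M) = D^2 + \<sigma>^2 * (\<Sum>s<k. (c s)^2)"
    using sq_integrable_integrable[OF sN] sq_integrable_mult_integrable[OF sN sN] EN ENN
    by (simp add: prob_space)
qed

lemma mode_second_moment:
  fixes Q :: "real^'n^'n" and \<alpha> \<beta> l :: real
  assumes sym: "transpose Q = Q" and xs: "Q *v xs = q" and u: "Q *v u = l *\<^sub>R u" "norm u = 1"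
  defines "a \<equiv> 1 + \<beta> - \<alpha> * l"
  shows "sq_integrable (\<lambda>\<omega>. u \<bullet> (tm_iter \<alpha> \<beta> 0 \<sigma>w Q q (\<lambda>s. w s \<omega>) x0 x1 k - xs))"
    and "(\<integral>\<omega>. (u \<bullet> (tm_iter \<alpha> \<beta> 0 \<sigma>w Q q (\<lambda>s. w s \<omega>) x0 x1 k - xs))^2 \<partial>M)
       = (lin_rec a (-\<beta>) (u \<bullet> (x0 - xs)) (u \<bullet> (x1 - xs)) k)^2
         + \<sigma>w^2 * (\<Sum>j<k. (lin_rec a (-\<beta>) 0 1 j)^2)"
proof -
  note component = inner_tm_iter_eigenvector[OF sym xs u(1), of \<alpha> \<beta> \<sigma>w, folded a_def]
  show "sq_integrable (\<lambda>\<omega>. u \<bullet> (tm_iter \<alpha> \<beta> 0 \<sigma>w Q q (\<lambda>s. w s \<omega>) x0 x1 k - xs))"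
    unfolding component by (rule second_moment_noise_response(1)[OF u(2)])
  have "(\<Sum>s<k. (lin_rec a (-\<beta>) 0 1 (k - 1 - s))^2) = (\<Sum>j<k. (lin_rec a (-\<beta>) 0 1 j)^2)"
    using sum.nat_diff_reindex[of "\<lambda>j. (lin_rec a (-\<beta>) 0 1 j)^2" k] by simp
  then show "(\<integral>\<omega>. (u \<bullet> (tm_iter \<alpha> \<beta> 0 \<sigma>w Q q (\<lambda>s. w s \<omega>) x0 x1 k - xs))^2 \<partial>M)
       = (lin_rec a (-\<beta>) (u \<bullet> (x0 - xs)) (u \<bullet> (x1 - xs)) k)^2
         + \<sigma>w^2 * (\<Sum>j<k. (lin_rec a (-\<beta>) 0 1 j)^2)"
    unfolding component second_moment_noise_response(2)[OF u(2)] by simp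
qed

lemma avg_err_tendsto:
  fixes Q :: "real^'n^'n"
  assumes sym: "transpose Q = Q" and pd: "\<And>x. x \<noteq> 0 \<Longrightarrow> 0 < x \<bullet> (Q *v x)"
    and B: "orthonormal_eigenvectors Q B" "finite B" "span B = UNIV"
    and stable: "\<bar>\<beta>\<bar> < 1" "\<And>u. u \<in> B \<Longrightarrow> \<bar>1 + \<beta> - \<alpha> * (u \<bullet> (Q *v u))\<bar> < 1 + \<beta>"
  shows "avg_err M w \<alpha> \<beta> 0 \<sigma>w Q q x0 x1
    \<longlonglongrightarrow> \<sigma>w^2 * (\<Sum>u\<in>B. impulse_energy (1 + \<beta> - \<alpha> * (u \<bullet> (Q *v u))) (-\<beta>))"
proof -
  define xs where "xs = quad_minimizer Q q"
  define a where "a u = 1 + \<beta> - \<alpha> * (u \<bullet> (Q *v u))" for u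
  define X where "X k \<omega> = tm_iter \<alpha> \<beta> 0 \<sigma>w Q q (\<lambda>s. w s \<omega>) x0 x1 k - xs" for k \<omega>
  have xs: "Q *v xs = q" unfolding xs_def by (rule quad_minimizer_solves[OF sym pd])
  have u: "Q *v u = (u \<bullet> (Q *v u)) *\<^sub>R u" "norm u = 1" if "u \<in> B" for u
    using B(1) that unfolding orthonormal_eigenvectors_def by auto
  have stable': "\<bar>-\<beta>\<bar> < 1" "\<bar>a u\<bar> < 1 - (-\<beta>)" if "u \<in> B" for u
    using stable that by (simp_all add: a_def)
  have moment: "sq_integrable (\<lambda>\<omega>. u \<bullet> X k \<omega>)"
    "(\<integral>\<omega>. (u \<bullet> X k \<omega>)^2 \<partial>M) = (lin_rec (a u) (-\<beta>) (u \<bullet> (x0 - xs)) (u \<bullet> (x1 - xs)) k)^2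
       + \<sigma>w^2 * (\<Sum>j<k. (lin_rec (a u) (-\<beta>) 0 1 j)^2)" if "u \<in> B" for u k
    using mode_second_moment[OF sym xs u[OF that]] by (simp_all add: X_def a_def)
  have "(\<lambda>k. \<integral>\<omega>. (norm (X k \<omega>))^2 \<partial>M) = (\<lambda>k. \<Sum>u\<in>B. \<integral>\<omega>. (u \<bullet> X k \<omega>)^2 \<partial>M)"
    using B moment(1) unfolding orthonormal_eigenvectors_def sq_integrable_def
    by (simp add: norm_power2_orthonormal_basis[of B] Bochner_Integration.integral_sum)
  also have "(\<lambda>k. \<Sum>u\<in>B. \<integral>\<omega>. (u \<bullet> X k \<omega>)^2 \<partial>M) \<longlonglongrightarrow> (\<Sum>u\<in>B. 0 + \<sigma>w^2 * impulse_energy (a u) (-\<beta>))"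
  proof (intro tendsto_sum)
    fix u assume "u \<in> B"
    have "(\<lambda>k. (lin_rec (a u) (-\<beta>) (u \<bullet> (x0 - xs)) (u \<bullet> (x1 - xs)) k)^2) \<longlonglongrightarrow> 0"
      using sums_power2_lin_rec[OF stable'[OF \<open>u \<in> B\<close>]] by (blast intro: summable_LIMSEQ_zero sums_summable)
    moreover have "(\<lambda>k. \<Sum>j<k. (lin_rec (a u) (-\<beta>) 0 1 j)^2) \<longlonglongrightarrow> impulse_energy (a u) (-\<beta>)"
      using sums_power2_impulse_response[OF stable'[OF \<open>u \<in> B\<close>]] by (simp add: sums_def)
    ultimately show "(\<lambda>k. \<integral>\<omega>. (u \<bullet> X k \<omega>)^2 \<partial>M) \<longlonglongrightarrow> 0 + \<sigma>w^2 * impulse_energy (a u) (-\<beta>)"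
      unfolding moment(2)[OF \<open>u \<in> B\<close>] by (intro tendsto_intros)
  qed
  finally have "(\<lambda>k. \<integral>\<omega>. (norm (X k \<omega>))^2 \<partial>M) \<longlonglongrightarrow> \<sigma>w^2 * (\<Sum>u\<in>B. impulse_energy (a u) (-\<beta>))"
    by (simp add: sum_distrib_left)
  moreover have "avg_err M w \<alpha> \<beta> 0 \<sigma>w Q q x0 x1 = (\<lambda>t. (1 / real t) * (\<Sum>k\<le>t. \<integral>\<omega>. (norm (X k \<omega>))^2 \<partial>M))"
    by (simp add: fun_eq_iff avg_err_def X_def xs_def)
  ultimately show ?thesis using cesaro_mean_tendsto by (simp add: a_def)
qed

end

section \<open>Extremal spectra for the tuned parameters\<close>

(* Steady-state variance, per unit noise variance, of the coordinate of the iterate along an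
   eigenvector of Q with eigenvalue l (for gamma = 0). *)
definition mode_energy :: "real \<Rightarrow> real \<Rightarrow> real \<Rightarrow> real" where
  "mode_energy \<alpha> \<beta> l = impulse_energy (1 + \<beta> - \<alpha> * l) (-\<beta>)"

lemma mode_energy_eq: "mode_energy \<alpha> \<beta> l = (1 + \<beta>) / ((1 - \<beta>) * (\<alpha> * l) * (2 * (1 + \<beta>) - \<alpha> * l))"
proof -
  have "(1 + \<beta>)^2 - (1 + \<beta> - \<alpha> * l)^2 = \<alpha> * l * (2 * (1 + \<beta>) - \<alpha> * l)"
    by (simp add: power2_eq_square algebra_simps)
  then show ?thesis by (simp add: mode_energy_def impulse_energy_def mult.assoc)
qed

lemma tuned_mode_stable:
  fixes \<alpha> \<beta> m l L :: real
  assumes "0 < m" "m \<le> l" "l \<le> L" "0 < \<alpha>" "\<alpha> * (m + L) = 2 * (1 + \<beta>)"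
  shows "\<bar>1 + \<beta> - \<alpha> * l\<bar> < 1 + \<beta>"
proof -
  have "0 < \<alpha> * l" using assms by simp
  moreover have "\<alpha> * l < \<alpha> * (m + L)" using assms by (intro mult_strict_left_mono) auto
  ultimately show ?thesis using assms(5) by (simp add: abs_less_iff)
qed

lemma tuned_mode_energy_eq:
  assumes "\<alpha> * (m + L) = 2 * (1 + \<beta>)"
  shows "mode_energy \<alpha> \<beta> l = (1 + \<beta>) / ((1 - \<beta>) * \<alpha>^2) / (l * (m + L - l))"
  unfolding mode_energy_eq assms[symmetric] by (simp add: power2_eq_square algebra_simps)

lemma tuned_mode_energy_bounds:
  assumes m: "0 < m" and l: "m \<le> l" "l \<le> L" and \<beta>: "\<bar>\<beta>\<bar> < 1" and \<alpha>: "0 < \<alpha>"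
    and tuned: "\<alpha> * (m + L) = 2 * (1 + \<beta>)"
  shows "mode_energy \<alpha> \<beta> l \<le> mode_energy \<alpha> \<beta> L"
    and "mode_energy \<alpha> \<beta> ((m + L) / 2) \<le> mode_energy \<alpha> \<beta> l"
    and "mode_energy \<alpha> \<beta> m = mode_energy \<alpha> \<beta> L"
proof -
  define K where "K = (1 + \<beta>) / ((1 - \<beta>) * \<alpha>^2)"
  have K: "0 < K" unfolding K_def using \<beta> \<alpha> by (simp add: abs_less_iff)
  have E: "mode_energy \<alpha> \<beta> x = K / (x * (m + L - x))" for x
    unfolding tuned_mode_energy_eq[OF tuned] K_def ..
  have ends: "L * (m + L - L) \<le> l * (m + L - l)"
    using mult_nonneg_nonneg[of "l - m" "L - l"] l by (simp add: algebra_simps)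
  have mid: "l * (m + L - l) \<le> (m + L) / 2 * (m + L - (m + L) / 2)"
    using zero_le_power2[of "l - (m + L) / 2"] by (simp add: power2_eq_square field_simps)
  have pos: "0 < L * (m + L - L)" using m l by simp
  show "mode_energy \<alpha> \<beta> l \<le> mode_energy \<alpha> \<beta> L"
    unfolding E by (rule divide_left_mono[OF ends]) (use K pos ends in auto)
  show "mode_energy \<alpha> \<beta> ((m + L) / 2) \<le> mode_energy \<alpha> \<beta> l"
    unfolding E by (rule divide_left_mono[OF mid]) (use K pos ends mid in auto)
  show "mode_energy \<alpha> \<beta> m = mode_energy \<alpha> \<beta> L" unfolding E by (simp add: mult.commute)
qed

lemma sum_bounds_extreme_ends:
  fixes g :: "real \<Rightarrow> real" and f :: "'a \<Rightarrow> real"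
  assumes B: "finite B" "2 \<le> card B"
    and range: "\<And>u. u \<in> B \<Longrightarrow> m \<le> f u \<and> f u \<le> L"
    and ends: "\<exists>u\<in>B. f u = m" "\<exists>u\<in>B. f u = L"
    and g_max: "\<And>l. m \<le> l \<Longrightarrow> l \<le> L \<Longrightarrow> g l \<le> g L"
    and g_min: "\<And>l. m \<le> l \<Longrightarrow> l \<le> L \<Longrightarrow> g x \<le> g l"
    and g_ends: "g m = g L"
  shows "(\<Sum>u\<in>B. g (f u)) \<le> card B * g L"
    and "2 * g L + (real (card B) - 2) * g x \<le> (\<Sum>u\<in>B. g (f u))"
proof -
  show "(\<Sum>u\<in>B. g (f u)) \<le> card B * g L"
    using range g_max sum_bounded_above[of B "\<lambda>u. g (f u)" "g L"] by simp
  obtain u\<^sub>m u\<^sub>L where u: "u\<^sub>m \<in> B" "f u\<^sub>m = m" "u\<^sub>L \<in> B" "f u\<^sub>L = L" using ends by blast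
  show "2 * g L + (real (card B) - 2) * g x \<le> (\<Sum>u\<in>B. g (f u))"
  proof (cases "u\<^sub>m = u\<^sub>L")
    case True
    then have "\<And>u. u \<in> B \<Longrightarrow> f u = L" using u range by force
    then have "(\<Sum>u\<in>B. g (f u)) = card B * g L" by simp
    moreover have "g x \<le> g L" using g_min[of L] u range by force
    then have "(real (card B) - 2) * g x \<le> (real (card B) - 2) * g L"
      using B(2) by (intro mult_left_mono) auto
    ultimately show ?thesis by (simp add: algebra_simps)
  next
    case False
    have "(\<Sum>u\<in>B. g (f u)) = g m + g L + (\<Sum>u\<in>B - {u\<^sub>m, u\<^sub>L}. g (f u))"
      using sum.subset_diff[of "{u\<^sub>m, u\<^sub>L}" B "\<lambda>u. g (f u)"] B(1) u False by simp
    moreover have "card (B - {u\<^sub>m, u\<^sub>L}) * g x \<le> (\<Sum>u\<in>B - {u\<^sub>m, u\<^sub>L}. g (f u))"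
      using range g_min by (intro sum_bounded_below) auto
    moreover have "card (B - {u\<^sub>m, u\<^sub>L}) = card B - 2" using B(1) u False by (simp add: card_Diff_subset)
    ultimately show ?thesis using B(2) g_ends by (simp add: of_nat_diff)
  qed
qed

context white_noise_space
begin

lemma avg_err_tendsto_tuned:
  fixes Q :: "real^'n^'n"
  assumes tuned: "0 < m" "0 < \<alpha>" "\<bar>\<beta>\<bar> < 1" "\<alpha> * (m + L) = 2 * (1 + \<beta>)"
    and Q: "transpose Q = Q" "\<And>x. x \<noteq> 0 \<Longrightarrow> 0 < x \<bullet> (Q *v x)"
    and B: "orthonormal_eigenvectors Q B" "finite B" "span B = UNIV"
      "\<And>u. u \<in> B \<Longrightarrow> m \<le> u \<bullet> (Q *v u) \<and> u \<bullet> (Q *v u) \<le> L"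
  shows "avg_err M w \<alpha> \<beta> 0 \<sigma>w Q q x0 x1 \<longlonglongrightarrow> \<sigma>w^2 * (\<Sum>u\<in>B. mode_energy \<alpha> \<beta> (u \<bullet> (Q *v u)))"
  unfolding mode_energy_def
proof (rule avg_err_tendsto[OF Q B(1-3) tuned(3)])
  fix u assume "u \<in> B"
  then show "\<bar>1 + \<beta> - \<alpha> * (u \<bullet> (Q *v u))\<bar> < 1 + \<beta>"
    using B(4) tuned_mode_stable[OF tuned(1) _ _ tuned(2,4)] by blast
qed

lemma avg_err_tendsto_in_QmL:
  fixes Q :: "real^'n^'n"
  assumes tuned: "0 < m" "0 < \<alpha>" "\<bar>\<beta>\<bar> < 1" "\<alpha> * (m + L) = 2 * (1 + \<beta>)" and Q: "in_QmL m L Q"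
  obtains B where "finite B" "card B = CARD('n)"
    "\<And>u. u \<in> B \<Longrightarrow> m \<le> u \<bullet> (Q *v u) \<and> u \<bullet> (Q *v u) \<le> L"
    "\<exists>u\<in>B. u \<bullet> (Q *v u) = m" "\<exists>u\<in>B. u \<bullet> (Q *v u) = L"
    "avg_err M w \<alpha> \<beta> 0 \<sigma>w Q q x0 x1 \<longlonglongrightarrow> \<sigma>w^2 * (\<Sum>u\<in>B. mode_energy \<alpha> \<beta> (u \<bullet> (Q *v u)))"
proof -
  obtain B where B: "orthonormal_eigenvectors Q B" "finite B" "card B = CARD('n)" "span B = UNIV"
    "\<And>u. u \<in> B \<Longrightarrow> m \<le> u \<bullet> (Q *v u) \<and> u \<bullet> (Q *v u) \<le> L"
    "\<exists>u\<in>B. u \<bullet> (Q *v u) = m" "\<exists>u\<in>B. u \<bullet> (Q *v u) = L"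
    using in_QmL_eigenbasis[OF Q] by blast
  have sym: "transpose Q = Q" and pd: "\<And>x. x \<noteq> 0 \<Longrightarrow> 0 < x \<bullet> (Q *v x)"
    using Q unfolding in_QmL_def by auto
  show thesis
  proof (rule that[OF B(2,3,5-7)])
    show "avg_err M w \<alpha> \<beta> 0 \<sigma>w Q q x0 x1 \<longlonglongrightarrow> \<sigma>w^2 * (\<Sum>u\<in>B. mode_energy \<alpha> \<beta> (u \<bullet> (Q *v u)))"
      by (rule avg_err_tendsto_tuned[OF tuned sym]) (use pd B in auto)
  qed
qed

lemma diag_mat_noise_amp_in_set:
  fixes d :: "'n \<Rightarrow> real"
  assumes tuned: "0 < m" "0 < \<alpha>" "\<bar>\<beta>\<bar> < 1" "\<alpha> * (m + L) = 2 * (1 + \<beta>)"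
    and d: "\<And>i. m \<le> d i \<and> d i \<le> L" "d i\<^sub>m = m" "d i\<^sub>L = L"
  shows "\<sigma>w^2 * (\<Sum>i\<in>UNIV. mode_energy \<alpha> \<beta> (d i)) \<in> noise_amp_set M w \<alpha> \<beta> 0 \<sigma>w m L x0 x1"
proof -
  have Q: "in_QmL m L (diag_mat d)" by (rule in_QmL_diag_mat[OF tuned(1) d])
  then have pd: "\<And>x. x \<noteq> 0 \<Longrightarrow> 0 < x \<bullet> (diag_mat d *v x)" unfolding in_QmL_def by blast
  have "inj (\<lambda>i::'n. axis i (1::real))" by (rule injI) (simp add: axis_eq_axis)
  then have "(\<Sum>u\<in>range (\<lambda>i. axis i 1). mode_energy \<alpha> \<beta> (u \<bullet> (diag_mat d *v u)))
      = (\<Sum>i\<in>UNIV. mode_energy \<alpha> \<beta> (d i))"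
    by (simp add: sum.reindex diag_mat_mult_axis inner_axis_axis)
  moreover have "avg_err M w \<alpha> \<beta> 0 \<sigma>w (diag_mat d) 0 x0 x1 \<longlonglongrightarrow>
      \<sigma>w^2 * (\<Sum>u\<in>range (\<lambda>i. axis i 1). mode_energy \<alpha> \<beta> (u \<bullet> (diag_mat d *v u)))"
    using d(1) by (intro avg_err_tendsto_tuned[OF tuned transpose_diag_mat pd orthonormal_eigenvectors_diag_mat
        _ span_range_axis]) (auto simp: diag_mat_mult_axis inner_axis_axis)
  ultimately have "\<sigma>w^2 * (\<Sum>i\<in>UNIV. mode_energy \<alpha> \<beta> (d i)) = noise_amp M w \<alpha> \<beta> 0 \<sigma>w (diag_mat d) 0 x0 x1"
    unfolding noise_amp_def by (simp add: limI)
  then show ?thesis using Q unfolding noise_amp_set_def by blast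
qed

lemma noise_amp_set_bounds:
  fixes m L \<alpha> \<beta> \<sigma>w :: real and x0 x1 :: "real^'n"
  assumes m: "0 < m" "m \<le> L" and n: "2 \<le> CARD('n)"
    and tuned: "0 < \<alpha>" "\<bar>\<beta>\<bar> < 1" "\<alpha> * (m + L) = 2 * (1 + \<beta>)"
    and v: "v \<in> noise_amp_set M w \<alpha> \<beta> 0 \<sigma>w m L x0 x1"
  shows "v \<le> \<sigma>w^2 * real CARD('n) * mode_energy \<alpha> \<beta> L"
    and "\<sigma>w^2 * (2 * mode_energy \<alpha> \<beta> L + (real CARD('n) - 2) * mode_energy \<alpha> \<beta> ((m + L) / 2)) \<le> v"
proof -
  let ?E = "mode_energy \<alpha> \<beta>"
  obtain Q :: "real^'n^'n" and q where Q: "in_QmL m L Q" and v: "v = noise_amp M w \<alpha> \<beta> 0 \<sigma>w Q q x0 x1"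
    using v unfolding noise_amp_set_def by blast
  obtain B where B: "finite B" "card B = CARD('n)" "\<And>u. u \<in> B \<Longrightarrow> m \<le> u \<bullet> (Q *v u) \<and> u \<bullet> (Q *v u) \<le> L"
    "\<exists>u\<in>B. u \<bullet> (Q *v u) = m" "\<exists>u\<in>B. u \<bullet> (Q *v u) = L"
    and lim: "avg_err M w \<alpha> \<beta> 0 \<sigma>w Q q x0 x1 \<longlonglongrightarrow> \<sigma>w^2 * (\<Sum>u\<in>B. ?E (u \<bullet> (Q *v u)))"
    by (rule avg_err_tendsto_in_QmL[OF m(1) tuned Q]) blast
  have "v = \<sigma>w^2 * (\<Sum>u\<in>B. ?E (u \<bullet> (Q *v u)))" unfolding v noise_amp_def using lim by (rule limI)
  moreover have "(\<Sum>u\<in>B. ?E (u \<bullet> (Q *v u))) \<le> real CARD('n) * ?E L"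
    "2 * ?E L + (real CARD('n) - 2) * ?E ((m + L) / 2) \<le> (\<Sum>u\<in>B. ?E (u \<bullet> (Q *v u)))"
    using sum_bounds_extreme_ends[OF B(1) _ B(3-5), of ?E "(m + L) / 2"] n B(2)
      tuned_mode_energy_bounds[OF m(1) _ _ tuned(2,1,3)] tuned_mode_energy_bounds(3)[OF m(1) order_refl m(2) tuned(2,1,3)]
    by auto
  ultimately show "v \<le> \<sigma>w^2 * real CARD('n) * ?E L"
    and "\<sigma>w^2 * (2 * ?E L + (real CARD('n) - 2) * ?E ((m + L) / 2)) \<le> v"
    by (simp_all add: mult_left_mono mult.assoc)
qed

lemma noise_amp_extremes:
  fixes m L \<alpha> \<beta> \<sigma>w :: real and x0 x1 :: "real^'n"
  assumes m: "0 < m" "m \<le> L" and n: "2 \<le> CARD('n)"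
    and tuned: "0 < \<alpha>" "\<bar>\<beta>\<bar> < 1" "\<alpha> * (m + L) = 2 * (1 + \<beta>)"
  defines "S \<equiv> noise_amp_set M w \<alpha> \<beta> 0 \<sigma>w m L x0 x1"
  shows "noise_amp_exists M w \<alpha> \<beta> 0 \<sigma>w m L x0 x1"
    and "is_max_of S (\<sigma>w^2 * real CARD('n) * mode_energy \<alpha> \<beta> L)"
    and "is_min_of S (\<sigma>w^2 * (2 * mode_energy \<alpha> \<beta> L + (real CARD('n) - 2) * mode_energy \<alpha> \<beta> ((m + L) / 2)))"
proof -
  let ?E = "mode_energy \<alpha> \<beta>"
  note tuned' = m(1) tuned
  have E_ends: "?E m = ?E L" by (rule tuned_mode_energy_bounds(3)[OF m(1) order_refl m(2) tuned(2,1,3)])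
  show "noise_amp_exists M w \<alpha> \<beta> 0 \<sigma>w m L x0 x1"
    unfolding noise_amp_exists_def
  proof (intro allI impI)
    fix Q :: "real^'n^'n" and q assume "in_QmL m L Q"
    then show "convergent (avg_err M w \<alpha> \<beta> 0 \<sigma>w Q q x0 x1)"
      by (rule avg_err_tendsto_in_QmL[OF tuned']) (auto intro: convergentI)
  qed
  obtain i\<^sub>m i\<^sub>L :: 'n where "i\<^sub>m \<noteq> i\<^sub>L"
    using n by (metis card_2_iff' ex_card obtain_subset_with_card_n)
  define d\<^sub>1 where "d\<^sub>1 i = (if i = i\<^sub>m then m else L)" for i
  define d\<^sub>2 where "d\<^sub>2 i = (if i = i\<^sub>m then m else if i = i\<^sub>L then L else (m + L) / 2)" for i
  have witness: "\<sigma>w^2 * (\<Sum>i\<in>UNIV. ?E (d i)) \<in> S"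
    if "\<And>i. m \<le> d i \<and> d i \<le> L" "d i\<^sub>m = m" "d i\<^sub>L = L" for d
    unfolding S_def by (rule diag_mat_noise_amp_in_set[OF tuned' that])
  have "(\<Sum>i\<in>UNIV. ?E (d\<^sub>1 i)) = real CARD('n) * ?E L"
    using E_ends by (simp add: d\<^sub>1_def if_distrib cong: if_cong)
  then have "\<sigma>w^2 * real CARD('n) * ?E L \<in> S"
    using witness[of d\<^sub>1] m \<open>i\<^sub>m \<noteq> i\<^sub>L\<close> by (simp add: d\<^sub>1_def mult.assoc)
  then show "is_max_of S (\<sigma>w^2 * real CARD('n) * ?E L)"
    using noise_amp_set_bounds(1)[OF m n tuned] unfolding is_max_of_def S_def by blast
  have "(\<Sum>i\<in>UNIV. ?E (d\<^sub>2 i)) = (\<Sum>i\<in>UNIV - {i\<^sub>m, i\<^sub>L}. ?E (d\<^sub>2 i)) + (\<Sum>i\<in>{i\<^sub>m, i\<^sub>L}. ?E (d\<^sub>2 i))"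
    by (rule sum.subset_diff) simp_all
  also have "\<dots> = 2 * ?E L + (real CARD('n) - 2) * ?E ((m + L) / 2)"
    using \<open>i\<^sub>m \<noteq> i\<^sub>L\<close> E_ends n by (simp add: d\<^sub>2_def card_Diff_subset of_nat_diff)
  finally have "\<sigma>w^2 * (2 * ?E L + (real CARD('n) - 2) * ?E ((m + L) / 2)) \<in> S"
    using witness[of d\<^sub>2] m \<open>i\<^sub>m \<noteq> i\<^sub>L\<close> by (simp add: d\<^sub>2_def)
  then show "is_min_of S (\<sigma>w^2 * (2 * ?E L + (real CARD('n) - 2) * ?E ((m + L) / 2)))"
    using noise_amp_set_bounds(2)[OF m n tuned] unfolding is_min_of_def S_def by blast
qed

lemma noise_amp_extremes_scaled:
  fixes m L \<alpha> \<beta> \<sigma>w T :: real and x0 x1 :: "real^'n"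
  assumes m: "0 < m" "m \<le> L" and n: "2 \<le> CARD('n)"
    and tuned: "0 < \<alpha>" "\<bar>\<beta>\<bar> < 1" "\<alpha> * (m + L) = 2 * (1 + \<beta>)"
    and A: "real CARD('n) * (\<sigma>w^2 * (mode_energy \<alpha> \<beta> L * T)) = A"
    and B: "2 * (\<sigma>w^2 * (mode_energy \<alpha> \<beta> L * T))
      + (real CARD('n) - 2) * (\<sigma>w^2 * (mode_energy \<alpha> \<beta> ((m + L) / 2) * T)) = B"
  shows "noise_amp_exists M w \<alpha> \<beta> 0 \<sigma>w m L x0 x1
    \<and> (\<exists>Jmax. is_max_of (noise_amp_set M w \<alpha> \<beta> 0 \<sigma>w m L x0 x1) Jmax \<and> Jmax * T = A)
    \<and> (\<exists>Jmin. is_min_of (noise_amp_set M w \<alpha> \<beta> 0 \<sigma>w m L x0 x1) Jmin \<and> Jmin * T = B)"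
  using noise_amp_extremes[OF m n tuned, of \<sigma>w x0 x1] A B
  by (intro conjI exI[of _ "\<sigma>w^2 * real CARD('n) * mode_energy \<alpha> \<beta> L"]
      exI[of _ "\<sigma>w^2 * (2 * mode_energy \<alpha> \<beta> L + (real CARD('n) - 2) * mode_energy \<alpha> \<beta> ((m + L) / 2))"])
    (simp_all add: algebra_simps)

end

section \<open>The parameters of the theorem\<close>

lemma tuned_momentum_c_bounds:
  fixes \<rho> \<kappa> c :: real
  assumes \<kappa>: "1 \<le> \<kappa>" and \<rho>: "0 < \<rho>" "\<rho> < 1" and \<rho>_cond: "(sqrt \<kappa> + 1) / 2 \<le> 1 / (1 - \<rho>)"
    and c: "c = (\<kappa> - (1 + \<rho>) / (1 - \<rho>)) / (\<rho> * (\<kappa> + (1 + \<rho>) / (1 - \<rho>)))"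
  shows "-1 \<le> c" and "c \<le> 1"
proof -
  define A where "A = (1 + \<rho>) / (1 - \<rho>)"
  have A: "A * (1 - \<rho>) = 1 + \<rho>" "0 < A" using \<rho> by (simp_all add: A_def)
  have den: "0 < \<rho> * (\<kappa> + A)" using \<rho> \<kappa> A by simp
  have c': "c = (\<kappa> - A) / (\<rho> * (\<kappa> + A))" by (simp add: c A_def)
  \<comment> \<open>c \<ge> -1 amounts to \<kappa> \<ge> 1, and c \<le> 1 to sqrt \<kappa> \<le> (1 + \<rho>)/(1 - \<rho>), the hypothesis on \<rho>.\<close>
  have "1 + \<rho> \<le> \<kappa> * (1 + \<rho>)" using \<kappa> \<rho> by simp
  then show "-1 \<le> c" unfolding c' using den A(1) by (simp add: le_divide_eq algebra_simps)
  have "sqrt \<kappa> \<le> A" using \<rho>_cond \<rho> by (simp add: A_def field_simps)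
  then have "(sqrt \<kappa>)^2 \<le> A^2" by (rule power_mono) (use \<kappa> in simp)
  then have "\<kappa> \<le> A^2" using \<kappa> by simp
  then have "\<kappa> * (1 - \<rho>) \<le> A * (A * (1 - \<rho>))" using \<rho> by (simp add: power2_eq_square mult_right_mono)
  then have "\<kappa> * (1 - \<rho>) \<le> A * (1 + \<rho>)" by (simp only: A(1))
  then show "c \<le> 1" unfolding c' using den A(1) by (simp add: divide_le_eq algebra_simps)
qed

lemma tuned_momentum_kappa_eq:
  fixes \<rho> \<kappa> c :: real
  assumes \<kappa>: "1 \<le> \<kappa>" and \<rho>: "0 < \<rho>" "\<rho> < 1"
    and c: "c = (\<kappa> - (1 + \<rho>) / (1 - \<rho>)) / (\<rho> * (\<kappa> + (1 + \<rho>) / (1 - \<rho>)))"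
  shows "\<kappa> = (1 + \<rho>) * (1 + c * \<rho>) / ((1 - \<rho>) * (1 - c * \<rho>))"
proof -
  define A where "A = (1 + \<rho>) / (1 - \<rho>)"
  have A: "0 < A" "A * (1 - \<rho>) = 1 + \<rho>" using \<rho> by (simp_all add: A_def)
  have "c * \<rho> = (\<kappa> - A) / (\<kappa> + A)" using \<rho> by (simp add: c A_def)
  then have "1 + c * \<rho> = 2 * \<kappa> / (\<kappa> + A)" "1 - c * \<rho> = 2 * A / (\<kappa> + A)"
    using A \<kappa> by (simp_all add: field_simps)
  then have "(1 + c * \<rho>) / (1 - c * \<rho>) = \<kappa> / A" using A \<kappa> by simp
  moreover have "(1 + \<rho>) * (1 + c * \<rho>) / ((1 - \<rho>) * (1 - c * \<rho>)) = A * ((1 + c * \<rho>) / (1 - c * \<rho>))"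
    by (simp add: A_def)
  ultimately show ?thesis using A by simp
qed

lemma damping_factors_pos:
  fixes \<rho> d :: real
  assumes "0 < \<rho>" "\<rho> < 1" "-1 \<le> d" "d \<le> 1"
  shows "0 < 1 + d * \<rho>" "0 < 1 - d * \<rho>" "0 < 1 + d * \<rho>^2" "0 < 1 - d * \<rho>^2"
proof -
  have d: "\<bar>d\<bar> \<le> 1" using assms by simp
  have "\<bar>d\<bar> * \<rho> \<le> \<rho>" "\<bar>d\<bar> * \<rho>^2 \<le> \<rho>^2"
    using d assms by (intro mult_left_le_one_le; simp)+
  moreover have "\<rho>^2 < 1" using assms by (simp add: power_less_one_iff)
  moreover have "\<bar>d * \<rho>\<bar> = \<bar>d\<bar> * \<rho>" "\<bar>d * \<rho>^2\<bar> = \<bar>d\<bar> * \<rho>^2" using assms by (simp_all add: abs_mult)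
  ultimately have "\<bar>d * \<rho>\<bar> < 1" "\<bar>d * \<rho>^2\<bar> < 1" using assms by linarith+
  then show "0 < 1 + d * \<rho>" "0 < 1 - d * \<rho>" "0 < 1 + d * \<rho>^2" "0 < 1 - d * \<rho>^2"
    by (auto simp: abs_less_iff)
qed

lemma tuned_mode_energies:
  fixes \<rho> c m L \<kappa> \<alpha> \<beta> :: real
  assumes \<rho>: "0 < \<rho>" "\<rho> < 1" and c: "-1 \<le> c" "c \<le> 1" and m: "0 < m"
    and \<kappa>: "\<kappa> = L / m" "\<kappa> = (1 + \<rho>) * (1 + c * \<rho>) / ((1 - \<rho>) * (1 - c * \<rho>))"
    and \<alpha>: "\<alpha> = (1 + \<rho>) * (1 + c * \<rho>) / L" and \<beta>: "\<beta> = c * \<rho>^2" and T: "T = 1 / (1 - \<rho>)"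
  defines "r \<equiv> (1 - c * \<rho>) / (1 - c * \<rho>^2)"
  shows "\<alpha> * (m + L) = 2 * (1 + \<beta>)"
    and "mode_energy \<alpha> \<beta> L * T = r / (2 * (1 + \<rho>)^2 * (1 + c * \<rho>)^2) * \<kappa> * (\<kappa> + 1)"
    and "mode_energy \<alpha> \<beta> ((m + L) / 2) * T = \<kappa> * (r / ((1 + \<rho>) * (1 + c * \<rho>^2) * (1 + c * \<rho>)))"
    and "\<alpha>^2 * (mode_energy \<alpha> \<beta> L * T) = r / (2 * L^2) * \<kappa> * (\<kappa> + 1)"
    and "\<alpha>^2 * (mode_energy \<alpha> \<beta> ((m + L) / 2) * T)
       = \<kappa> * (r * ((1 + c * \<rho>) / (1 + c * \<rho>^2)) * (1 + \<rho>) / L^2)"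
proof -
  note pos = damping_factors_pos[OF \<rho> c]
  have "0 < \<kappa>" using \<kappa>(2) \<rho> pos by simp
  then have L: "L = \<kappa> * m" "0 < L" using \<kappa>(1) m by (simp_all add: zero_less_divide_iff)
  have \<alpha>L: "\<alpha> * L = (1 + \<rho>) * (1 + c * \<rho>)" using \<alpha> L(2) by simp
  have "\<alpha> * m = \<alpha> * L / \<kappa>" using L \<open>0 < \<kappa>\<close> by simp
  also have "\<dots> = (1 - \<rho>) * (1 - c * \<rho>)" unfolding \<alpha>L \<kappa>(2) using \<rho> pos by simp
  finally have \<alpha>m: "\<alpha> * m = (1 - \<rho>) * (1 - c * \<rho>)" .
  show tuned: "\<alpha> * (m + L) = 2 * (1 + \<beta>)"
    using \<alpha>L \<alpha>m \<beta> by (simp add: distrib_left power2_eq_square algebra_simps)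
  have "1 + \<beta> \<noteq> 0" using pos(3) \<beta> by simp
  have EL: "mode_energy \<alpha> \<beta> L
      = (1 + c * \<rho>^2) / ((1 - c * \<rho>^2) * ((1 + \<rho>) * (1 + c * \<rho>)) * ((1 - \<rho>) * (1 - c * \<rho>)))"
    unfolding mode_energy_eq tuned[symmetric] \<alpha>L[symmetric] \<alpha>m[symmetric] \<beta>[symmetric]
    by (simp add: algebra_simps)
  have mid: "\<alpha> * ((m + L) / 2) = 1 + \<beta>" using tuned by simp
  have Emid: "mode_energy \<alpha> \<beta> ((m + L) / 2) = 1 / ((1 - c * \<rho>^2) * (1 + c * \<rho>^2))"
    unfolding mode_energy_eq mid \<beta>[symmetric] using \<open>1 + \<beta> \<noteq> 0\<close> by (simp add: mult.assoc)
  have nz: "1 + \<rho> \<noteq> 0" "1 - \<rho> \<noteq> 0" "1 + c * \<rho> \<noteq> 0" "1 - c * \<rho> \<noteq> 0"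
    "1 + c * \<rho>^2 \<noteq> 0" "1 - c * \<rho>^2 \<noteq> 0" "L \<noteq> 0"
    using \<rho> pos L by auto
  have \<alpha>2: "\<alpha>^2 = ((1 + \<rho>) * (1 + c * \<rho>))^2 / L^2" unfolding \<alpha> by (simp add: power_divide)
  show "mode_energy \<alpha> \<beta> L * T = r / (2 * (1 + \<rho>)^2 * (1 + c * \<rho>)^2) * \<kappa> * (\<kappa> + 1)"
    unfolding EL \<kappa>(2) r_def T using nz by (simp add: divide_simps; simp add: algebra_simps power2_eq_square)
  show "mode_energy \<alpha> \<beta> ((m + L) / 2) * T = \<kappa> * (r / ((1 + \<rho>) * (1 + c * \<rho>^2) * (1 + c * \<rho>)))"
    unfolding Emid \<kappa>(2) r_def T using nz by (simp add: divide_simps; simp add: algebra_simps power2_eq_square)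
  show "\<alpha>^2 * (mode_energy \<alpha> \<beta> L * T) = r / (2 * L^2) * \<kappa> * (\<kappa> + 1)"
    unfolding EL \<alpha>2 \<kappa>(2) r_def T using nz by (simp add: divide_simps; simp add: algebra_simps power2_eq_square)
  show "\<alpha>^2 * (mode_energy \<alpha> \<beta> ((m + L) / 2) * T)
       = \<kappa> * (r * ((1 + c * \<rho>) / (1 + c * \<rho>^2)) * (1 + \<rho>) / L^2)"
    unfolding Emid \<alpha>2 \<kappa>(2) r_def T using nz by (simp add: divide_simps; simp add: algebra_simps power2_eq_square)
qed

lemma damping_ratio_bounds:
  fixes \<rho> d :: real
  assumes \<rho>: "0 < \<rho>" "\<rho> < 1" and d: "-1 \<le> d" "d \<le> 1"
  shows "1 / 2 \<le> (1 - d * \<rho>) / (1 - d * \<rho>^2)"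
    and "(1 - d * \<rho>) / (1 - d * \<rho>^2) \<le> 2"
    and "0 \<le> d \<Longrightarrow> (1 - d * \<rho>) / (1 - d * \<rho>^2) \<le> 1"
    and "(1 - d * \<rho>) / (1 - d * \<rho>^2) * ((1 + d * \<rho>) / (1 + d * \<rho>^2)) \<le> 1"
proof -
  note pos = damping_factors_pos[OF \<rho> d]
  have "0 \<le> 1 - 2 * d * \<rho> + d * \<rho>^2"
  proof (cases "0 \<le> d")
    case True
    have "0 \<le> (1 - d) + d * (1 - \<rho>)^2" using True d by simp
    then show ?thesis by (simp add: power2_eq_square algebra_simps)
  next
    case False
    have "0 \<le> 1 + (-d) * (\<rho> * (2 - \<rho>))" using False \<rho> by (intro add_nonneg_nonneg mult_nonneg_nonneg) auto
    then show ?thesis by (simp add: power2_eq_square algebra_simps)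
  qed
  then show "1 / 2 \<le> (1 - d * \<rho>) / (1 - d * \<rho>^2)" using pos by (simp add: le_divide_eq)
  have "\<bar>\<rho> * (1 - 2 * \<rho>)\<bar> \<le> 1" unfolding abs_mult using \<rho> by (intro mult_le_one) (auto simp: abs_le_iff)
  then have "\<bar>d * (\<rho> * (1 - 2 * \<rho>))\<bar> \<le> 1" unfolding abs_mult[of d] using d by (intro mult_le_one) auto
  then have "0 \<le> 1 + d * \<rho> - 2 * d * \<rho>^2" by (simp add: abs_le_iff power2_eq_square algebra_simps)
  then show "(1 - d * \<rho>) / (1 - d * \<rho>^2) \<le> 2" using pos by (simp add: divide_le_eq)
  show "(1 - d * \<rho>) / (1 - d * \<rho>^2) \<le> 1" if "0 \<le> d"
  proof -
    have "d * \<rho>^2 \<le> d * \<rho>" using that \<rho> by (intro mult_left_mono) (simp_all add: power2_eq_square)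
    then show ?thesis using pos by (simp add: divide_le_eq)
  qed
  have "d^2 * \<rho>^2 * \<rho>^2 \<le> d^2 * \<rho>^2"
    using \<rho> by (intro mult_left_le) (auto simp: power_le_one)
  then have "(1 - d * \<rho>) * (1 + d * \<rho>) \<le> (1 - d * \<rho>^2) * (1 + d * \<rho>^2)"
    by (simp add: power2_eq_square algebra_simps)
  then show "(1 - d * \<rho>) / (1 - d * \<rho>^2) * ((1 + d * \<rho>) / (1 + d * \<rho>^2)) \<le> 1"
    using pos by (simp add: divide_le_eq)
qed

lemma iterate_noise_gain_bounds:
  fixes \<rho> c :: real
  assumes \<rho>: "0 < \<rho>" "\<rho> < 1" and c: "0 \<le> c" "c \<le> 1"
  defines "r \<equiv> (1 - c * \<rho>) / (1 - c * \<rho>^2)"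
  shows "1 / 64 \<le> r / (2 * (1 + \<rho>)^2 * (1 + c * \<rho>)^2)" and "r / (2 * (1 + \<rho>)^2 * (1 + c * \<rho>)^2) \<le> 1 / 2"
    and "1 / 16 \<le> r / ((1 + \<rho>) * (1 + c * \<rho>^2) * (1 + c * \<rho>))"
    and "r / ((1 + \<rho>) * (1 + c * \<rho>^2) * (1 + c * \<rho>)) \<le> 1"
proof -
  have r: "1 / 2 \<le> r" "r \<le> 1"
    using damping_ratio_bounds[OF \<rho>, of c] c unfolding r_def by simp_all
  have cr: "0 \<le> c * \<rho>" "c * \<rho> \<le> 1" "0 \<le> c * \<rho>^2" "c * \<rho>^2 \<le> 1"
    using c \<rho> by (simp_all add: mult_le_one power_le_one)
  define D where "D = 2 * (1 + \<rho>)^2 * (1 + c * \<rho>)^2"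
  have "(1 + \<rho>)^2 \<le> 2^2" "(1 + c * \<rho>)^2 \<le> 2^2" using \<rho> cr by (intro power_mono; simp)+
  moreover have "1 \<le> (1 + \<rho>)^2" "1 \<le> (1 + c * \<rho>)^2" using \<rho> cr by (simp_all add: one_le_power)
  ultimately have D: "2 \<le> D" "D \<le> 32"
    unfolding D_def using mult_mono[of 1 "(1 + \<rho>)^2" 1 "(1 + c * \<rho>)^2"]
      mult_mono[of "(1 + \<rho>)^2" 4 "(1 + c * \<rho>)^2" 4] by simp_all
  define E where "E = (1 + \<rho>) * (1 + c * \<rho>^2) * (1 + c * \<rho>)"
  have E: "1 \<le> E" "E \<le> 8"
  proof -
    have "1 * 1 * 1 \<le> E" "E \<le> 2 * 2 * 2" unfolding E_def using \<rho> cr by (intro mult_mono; simp)+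
    then show "1 \<le> E" "E \<le> 8" by simp_all
  qed
  show "1 / 64 \<le> r / (2 * (1 + \<rho>)^2 * (1 + c * \<rho>)^2)"
    unfolding D_def[symmetric] using frac_le[of "1 / 2" r 32 D] r D by simp
  show "r / (2 * (1 + \<rho>)^2 * (1 + c * \<rho>)^2) \<le> 1 / 2"
    unfolding D_def[symmetric] using frac_le[of r 1 2 D] r D by simp
  show "1 / 16 \<le> r / ((1 + \<rho>) * (1 + c * \<rho>^2) * (1 + c * \<rho>))"
    unfolding E_def[symmetric] using frac_le[of "1 / 2" r 8 E] r E by simp
  show "r / ((1 + \<rho>) * (1 + c * \<rho>^2) * (1 + c * \<rho>)) \<le> 1"
    unfolding E_def[symmetric] using frac_le[of r 1 1 E] r E by simp
qed

lemma gradient_noise_gain_bounds: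
  fixes \<rho> c L :: real
  assumes \<rho>: "0 < \<rho>" "\<rho> < 1" and c: "-1 \<le> c" "c \<le> 1" and L: "0 < L"
  defines "r \<equiv> (1 - c * \<rho>) / (1 - c * \<rho>^2)"
  shows "1 / (4 * L^2) \<le> r / (2 * L^2)" and "r / (2 * L^2) \<le> 1 / L^2"
    and "1 / (4 * L^2) \<le> r * ((1 + c * \<rho>) / (1 + c * \<rho>^2)) * (1 + \<rho>) / L^2"
    and "r * ((1 + c * \<rho>) / (1 + c * \<rho>^2)) * (1 + \<rho>) / L^2 \<le> 4 / L^2"
proof -
  note r = damping_ratio_bounds[OF \<rho> c, folded r_def]
  have r': "1 / 2 \<le> (1 + c * \<rho>) / (1 + c * \<rho>^2)" using damping_ratio_bounds(1)[OF \<rho>, of "-c"] c by simp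
  show "1 / (4 * L^2) \<le> r / (2 * L^2)" "r / (2 * L^2) \<le> 1 / L^2" using r(1,2) L by (simp_all add: field_simps)
  define R where "R = r * ((1 + c * \<rho>) / (1 + c * \<rho>^2))"
  have "0 \<le> r" using r(1) by linarith
  then have "1 / 4 \<le> R" unfolding R_def using mult_mono[OF r(1) r'] by simp
  moreover have "R * 1 \<le> R * (1 + \<rho>)" using \<rho> \<open>1 / 4 \<le> R\<close> by (intro mult_left_mono) auto
  ultimately have "1 / 4 \<le> R * (1 + \<rho>)" by linarith
  have "R * (1 + \<rho>) \<le> 1 * 2" using \<open>1 / 4 \<le> R\<close> r(4) \<rho> unfolding R_def by (intro mult_mono) auto
  then have "R * (1 + \<rho>) \<le> 4" by simp
  then show "r * ((1 + c * \<rho>) / (1 + c * \<rho>^2)) * (1 + \<rho>) / L^2 \<le> 4 / L^2"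
    unfolding R_def[symmetric] by (rule divide_right_mono) simp
  have "1 / 4 / L^2 \<le> R * (1 + \<rho>) / L^2"
    using \<open>1 / 4 \<le> R * (1 + \<rho>)\<close> by (rule divide_right_mono) simp
  then show "1 / (4 * L^2) \<le> r * ((1 + c * \<rho>) / (1 + c * \<rho>^2)) * (1 + \<rho>) / L^2"
    unfolding R_def[symmetric] by simp
qed

theorem proposition2:
  fixes m L \<rho> :: real
    and M :: "'w measure" and w :: "nat \<Rightarrow> 'w \<Rightarrow> real^'n" and x0 x1 :: "real^'n"
    and \<kappa> Ts c \<alpha> \<beta> \<gamma> p1 p2 p3 p4 n :: real and qc :: "real \<Rightarrow> real"
  assumes n2: "CARD('n) \<ge> 2"
    and mpos: "0 < m" and mL: "m \<le> L"
    and rho: "0 < \<rho>" "\<rho> < 1"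
    and rho_cond: "1 / (1 - \<rho>) \<ge> (sqrt \<kappa> + 1) / 2"
    and prob: "prob_space M" and wn: "white_noise M w"
    and kappa_def: "\<kappa> = L / m"
    and Ts_def: "Ts = 1 / (1 - \<rho>)"
    and c_def: "c = (\<kappa> - (1 + \<rho>) / (1 - \<rho>)) / (\<rho> * (\<kappa> + (1 + \<rho>) / (1 - \<rho>)))"
    and alpha_def: "\<alpha> = (1 + \<rho>) * (1 + c * \<rho>) / L"
    and beta_def: "\<beta> = c * \<rho>^2"
    and gamma_def: "\<gamma> = 0"
    and qc_def: "\<And>d. qc d = (1 - d * \<rho>) / (1 - d * \<rho>^2)"
    and p1_def: "p1 = qc c / (2 * (1 + \<rho>)^2 * (1 + c * \<rho>)^2)"
    and p2_def: "p2 = qc c / ((1 + \<rho>) * (1 + c * \<rho>^2) * (1 + c * \<rho>))"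
    and p3_def: "p3 = qc c / (2 * L^2)"
    and p4_def: "p4 = qc c * qc (- c) * (1 + \<rho>) / L^2"
    and n_def: "n = real CARD('n)"
  shows "(-1 \<le> c \<and> c \<le> 1)
    \<and> (\<forall>\<sigma>w>0. noise_amp_exists M w \<alpha> \<beta> \<gamma> \<sigma>w m L x0 x1
           \<and> (\<exists>Jmax. is_max_of (noise_amp_set M w \<alpha> \<beta> \<gamma> \<sigma>w m L x0 x1) Jmax
                   \<and> Jmax * Ts = \<sigma>w^2 * p1 * n * \<kappa> * (\<kappa> + 1))
           \<and> (\<exists>Jmin. is_min_of (noise_amp_set M w \<alpha> \<beta> \<gamma> \<sigma>w m L x0 x1) Jmin
                   \<and> Jmin * Ts = \<sigma>w^2 * \<kappa> * (2 * p1 * (\<kappa> + 1) + (n - 2) * p2)))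
    \<and> (\<forall>\<sigma>>0. noise_amp_exists M w \<alpha> \<beta> \<gamma> (\<alpha> * \<sigma>) m L x0 x1
           \<and> (\<exists>Jmax. is_max_of (noise_amp_set M w \<alpha> \<beta> \<gamma> (\<alpha> * \<sigma>) m L x0 x1) Jmax
                   \<and> Jmax * Ts = \<sigma>^2 * p3 * n * \<kappa> * (\<kappa> + 1))
           \<and> (\<exists>Jmin. is_min_of (noise_amp_set M w \<alpha> \<beta> \<gamma> (\<alpha> * \<sigma>) m L x0 x1) Jmin
                   \<and> Jmin * Ts = \<sigma>^2 * \<kappa> * (2 * p3 * (\<kappa> + 1) + (n - 2) * p4)))
    \<and> (0 \<le> c \<longrightarrow> (1/64 \<le> p1 \<and> p1 \<le> 1/2 \<and> 1/16 \<le> p2 \<and> p2 \<le> 1))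
    \<and> (1 / (4 * L^2) \<le> p3 \<and> p3 \<le> 1 / L^2 \<and> 1 / (4 * L^2) \<le> p4 \<and> p4 \<le> 4 / L^2)"
proof -
  have \<kappa>: "1 \<le> \<kappa>" using kappa_def mpos mL by simp
  have c: "-1 \<le> c" "c \<le> 1" by (rule tuned_momentum_c_bounds[OF \<kappa> rho rho_cond c_def])+
  note pos = damping_factors_pos[OF rho c]
  have L: "0 < L" using mpos mL by simp
  have \<alpha>: "0 < \<alpha>" and \<beta>: "\<bar>\<beta>\<bar> < 1" using L rho pos by (auto simp: alpha_def beta_def)
  have q: "qc c = (1 - c * \<rho>) / (1 - c * \<rho>^2)" "qc (-c) = (1 + c * \<rho>) / (1 + c * \<rho>^2)"
    by (simp_all add: qc_def)
  note E = tuned_mode_energies[OF rho c mpos kappa_def tuned_momentum_kappa_eq[OF \<kappa> rho c_def]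
      alpha_def beta_def Ts_def, folded q, folded p1_def p2_def p3_def p4_def]
  interpret white_noise_space M w by (rule white_noise_space.intro[OF prob]) (simp add: white_noise_space_axioms_def wn)
  note J = noise_amp_extremes_scaled[OF mpos mL n2 \<alpha> \<beta> E(1), folded n_def]
  have iterate_noise: "n * (s^2 * (mode_energy \<alpha> \<beta> L * Ts)) = s^2 * p1 * n * \<kappa> * (\<kappa> + 1)"
    "2 * (s^2 * (mode_energy \<alpha> \<beta> L * Ts)) + (n - 2) * (s^2 * (mode_energy \<alpha> \<beta> ((m + L) / 2) * Ts))
       = s^2 * \<kappa> * (2 * p1 * (\<kappa> + 1) + (n - 2) * p2)" for s
    unfolding E(2,3) by (simp_all add: algebra_simps)
  have gradient_scaling: "(\<alpha> * s)^2 * X = s^2 * (\<alpha>^2 * X)" for s X by (simp add: power_mult_distrib)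
  have gradient_noise: "n * ((\<alpha> * s)^2 * (mode_energy \<alpha> \<beta> L * Ts)) = s^2 * p3 * n * \<kappa> * (\<kappa> + 1)"
    "2 * ((\<alpha> * s)^2 * (mode_energy \<alpha> \<beta> L * Ts))
       + (n - 2) * ((\<alpha> * s)^2 * (mode_energy \<alpha> \<beta> ((m + L) / 2) * Ts))
       = s^2 * \<kappa> * (2 * p3 * (\<kappa> + 1) + (n - 2) * p4)" for s
    unfolding gradient_scaling E(4,5) by (simp_all add: algebra_simps)
  have "0 \<le> c \<longrightarrow> 1/64 \<le> p1 \<and> p1 \<le> 1/2 \<and> 1/16 \<le> p2 \<and> p2 \<le> 1"
    using iterate_noise_gain_bounds[OF rho _ c(2)] unfolding p1_def p2_def q by blast
  moreover have "1 / (4 * L^2) \<le> p3 \<and> p3 \<le> 1 / L^2 \<and> 1 / (4 * L^2) \<le> p4 \<and> p4 \<le> 4 / L^2"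
    using gradient_noise_gain_bounds[OF rho c L] unfolding p3_def p4_def q by blast
  ultimately show ?thesis unfolding gamma_def using c J[OF iterate_noise] J[OF gradient_noise] by blast
qed

end
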